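(* Let ${\cal H}\subset{\cal H}_0$, ${\mathcal D}$, $b$, $\mu_\ell^{-1}$, $\epsilon_\ell$, $a_\ell$, ${\mathcal A}_\ell$ ($\ell=1,2$) be as in the context (in particular, the standing assumptions there hold). Let $({\cal H}_N)_{N=1}^\infty$ be finite-dimensional subspaces of ${\cal H}$, and for each $N$ let $\mathsf{A}_1,\mathsf{A}_2$ be the associated Galerkin matrices and $\mathsf{D}$, $m_\pm$ as in the context. Suppose ${\mathcal A}_1:{\cal H}\to{\cal H}^*$ is invertible and there exists $C_1>0$ such that for all $N\in\mathbb{Z}^+$ $$\inf_{u_N\in {\cal H}_N\setminus\{0\}} \sup_{v_N\in {\cal H}_N\setminus\{0\}} \frac{|a_1(u_N,v_N)|}{\|u_N\|_{{\cal H}}\|v_N\|_{{\cal H}}}\geq \frac{1}{C_1\|{\mathcal A}_1^{-1}\|_{{\cal H}^*\to{\cal H}}}$$ and, for all $v_N\in{\cal H}_N\setminus\{0\}$, $\sup_{u_N\in{\cal H}_N\setminus\{0\}}|a_1(u_N,v_N)|>0$. If $$\Big(\|\mu_1^{-1}-\mu_2^{-1}\|_{{\cal H}_0\to{\cal H}_0}+\|\epsilon_1-\epsilon_2\|_{{\cal H}_0\to{\cal H}_0}\Big)C_1\|{\mathcal A}_1^{-1}\|_{{\cal H}^*\to{\cal H}}\leq \tfrac12,$$ then $\mathsf{A}_2^{-1}$ exists and $$\max\Big\{\|\mathsf{I}-\mathsf{A}_2^{-1}\mathsf{A}_1\|_{\mathsf{D}},\ \|\mathsf{I}-\mathsf{A}_1\mathsf{A}_2^{-1}\|_{\mathsf{D}^{-1}}\Big\}\leq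 2\Big(\|\mu_1^{-1}-\mu_2^{-1}\|_{{\cal H}_0\to{\cal H}_0}+\|\epsilon_1-\epsilon_2\|_{{\cal H}_0\to{\cal H}_0}\Big)C_1\|{\mathcal A}_1^{-1}\|_{{\cal H}^*\to{\cal H}}.$$ Furthermore, if $\mu_1=\mu_2$, then $$\max\Big\{\|\mathsf{I}-\mathsf{A}_2^{-1}\mathsf{A}_1\|_2,\ \|\mathsf{I}-\mathsf{A}_1\mathsf{A}_2^{-1}\|_2\Big\}\leq 2\frac{m_+}{m_-}\|\epsilon_1-\epsilon_2\|_{{\cal H}_0\to{\cal H}_0}C_1\|{\mathcal A}_1^{-1}\|_{{\cal H}^*\to{\cal H}}.$$
   Context: Standing assumptions: ${\cal H}\subset{\cal H}_0$ are complex Hilbert spaces with $\|v\|_{{\cal H}_0}\le\|v\|_{{\cal H}}$ for $v\in{\cal H}$, and ${\cal H}_0$ is identified with its dual so that ${\cal H}\subset{\cal H}_0\subset{\cal H}^*$. ${\mathcal D}:{\cal H}\to{\cal H}_0$ is linear with $\|{\mathcal D}\|_{{\cal H}\to{\cal H}_0}\le 1$; $b(\cdot,\cdot)$ is a continuous sesquilinear form on ${\cal H}$; for $\ell=1,2$, $\mu_\ell^{-1}:{\cal H}_0\to{\cal H}_0$ and $\epsilon_\ell:{\cal H}_0\to{\cal H}_0$ are bounded linear operators, and $a_\ell(u,v):=(\mu_\ell^{-1}{\mathcal D}u,{\mathcal D}v)_{{\cal H}_0}+b(u,v)-(\epsilon_\ell u,v)_{{\cal H}_0}$. For $\ell=1,2$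 there exist $C_{{\rm G1},\ell},C_{{\rm G2},\ell}>0$ with $|a_\ell(v,v)+C_{{\rm G2},\ell}\|v\|_{{\cal H}_0}^2|\ge C_{{\rm G1},\ell}\|v\|_{{\cal H}}^2$ for all $v\in{\cal H}$. ${\mathcal A}_\ell:{\cal H}\to{\cal H}^*$ is defined by $\langle{\mathcal A}_\ell u,v\rangle_{{\cal H}^*\times{\cal H}}=a_\ell(u,v)$. Discrete notation: ${\cal H}_N\subset{\cal H}$ has basis $\{\phi_j\}_{j=1}^N$; $(\mathsf{A}_\ell)_{ij}=a_\ell(\phi_j,\phi_i)$. $\mathsf{D}$ is the Hermitian positive-definite matrix such that, writing $\|\mathbf V\|_{\mathsf D}:=(\mathsf D\mathbf V,\mathbf V)_2^{1/2}$, one has $\|\sum_j V_j\phi_j\|_{{\cal H}}=\|\mathbf V\|_{\mathsf D}$ for all $\mathbf V\in\mathbb{C}^N$; $\|\mathbf V\|_{\mathsf D^{-1}}:=(\mathsf D^{-1}\mathbf V,\mathbf V)_2^{1/2}$; matrix norms $\|\cdot\|_{\mathsf D}$, $\|\cdot\|_{\mathsf D^{-1}}$, $\|\cdot\|_2$ are those induced by the corresponding vector norms ($\|\cdot\|_2$ Euclidean). $m_\pm>0$ are such that $m_-\|\mathbf V\|_2\le\|\sum_jV_j\phi_j\|_{{\cal H}_0}\le m_+\|\mathbf V\|_2$ for all $\mathbf V\in\mathbb{C}^N$. *)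

theory Defs
  imports "Jordan_Normal_Form.Matrix" "HOL-Library.Extended_Real"
begin

text \<open>Complex vector spaces are modelled as a type 'a (the space H0) with a
  complex scalar multiplication sc satisfying the axioms of the HOL locale
  vector_space.  Subspaces are sets of 'a.\<close>

definition ipnorm :: "('a \<Rightarrow> 'a \<Rightarrow> complex) \<Rightarrow> 'a \<Rightarrow> real" where
  "ipnorm ip x = sqrt (Re (ip x x))"

definition cinner_on :: "(complex \<Rightarrow> 'a::ab_group_add \<Rightarrow> 'a) \<Rightarrow> 'a set \<Rightarrow> ('a \<Rightarrow> 'a \<Rightarrow> complex) \<Rightarrow> bool" where
  "cinner_on sc S ip \<longleftrightarrow> module.subspace sc S \<and>
     (\<forall>x\<in>S. \<forall>y\<in>S. \<forall>z\<in>S. ip (x + y) z = ip x z + ip y z) \<and>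
     (\<forall>c. \<forall>x\<in>S. \<forall>y\<in>S. ip (sc c x) y = c * ip x y) \<and>
     (\<forall>x\<in>S. \<forall>y\<in>S. ip y x = cnj (ip x y)) \<and>
     (\<forall>x\<in>S. 0 \<le> Re (ip x x)) \<and>
     (\<forall>x\<in>S. ip x x = 0 \<longrightarrow> x = 0)"

definition complete_on :: "'a::ab_group_add set \<Rightarrow> ('a \<Rightarrow> 'a \<Rightarrow> complex) \<Rightarrow> bool" where
  "complete_on S ip \<longleftrightarrow> (\<forall>X. (\<forall>n. X n \<in> S) \<and>
       (\<forall>e>0. \<exists>M. \<forall>m\<ge>M. \<forall>n\<ge>M. ipnorm ip (X m - X n) < e)
     \<longrightarrow> (\<exists>L\<in>S. (\<lambda>n. ipnorm ip (X n - L)) \<longlonglongrightarrow> 0))"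

definition hilbert_on :: "(complex \<Rightarrow> 'a::ab_group_add \<Rightarrow> 'a) \<Rightarrow> 'a set \<Rightarrow> ('a \<Rightarrow> 'a \<Rightarrow> complex) \<Rightarrow> bool" where
  "hilbert_on sc S ip \<longleftrightarrow> cinner_on sc S ip \<and> complete_on S ip"

definition clinear_on :: "(complex \<Rightarrow> 'a::ab_group_add \<Rightarrow> 'a) \<Rightarrow> 'a set \<Rightarrow> ('a \<Rightarrow> 'a) \<Rightarrow> bool" where
  "clinear_on sc S f \<longleftrightarrow> (\<forall>x\<in>S. \<forall>y\<in>S. f (x + y) = f x + f y) \<and>
     (\<forall>c. \<forall>x\<in>S. f (sc c x) = sc c (f x))"

definition bounded_op :: "'a set \<Rightarrow> ('a \<Rightarrow> real) \<Rightarrow> ('b \<Rightarrow> real) \<Rightarrow> ('a \<Rightarrow> 'b) \<Rightarrow> bool" where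
  "bounded_op S nS nT f \<longleftrightarrow> (\<exists>K. \<forall>x\<in>S. nT (f x) \<le> K * nS x)"

definition op_norm :: "'a set \<Rightarrow> ('a \<Rightarrow> real) \<Rightarrow> ('b \<Rightarrow> real) \<Rightarrow> ('a \<Rightarrow> 'b) \<Rightarrow> real" where
  "op_norm S nS nT f = Sup {nT (f x) | x. x \<in> S \<and> nS x \<le> 1}"

definition bdd_sesq_on :: "(complex \<Rightarrow> 'a::ab_group_add \<Rightarrow> 'a) \<Rightarrow> 'a set \<Rightarrow> ('a \<Rightarrow> real) \<Rightarrow> ('a \<Rightarrow> 'a \<Rightarrow> complex) \<Rightarrow> bool" where
  "bdd_sesq_on sc S nS b \<longleftrightarrow>
     (\<forall>x\<in>S. \<forall>y\<in>S. \<forall>z\<in>S. b (x + y) z = b x z + b y z \<and> b z (x + y) = b z x + b z y) \<and>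
     (\<forall>c. \<forall>x\<in>S. \<forall>y\<in>S. b (sc c x) y = c * b x y \<and> b x (sc c y) = cnj c * b x y) \<and>
     (\<exists>K. \<forall>x\<in>S. \<forall>y\<in>S. cmod (b x y) \<le> K * nS x * nS y)"

text \<open>The dual space H*: bounded conjugate-linear functionals on S
  (so that the H0 inner product (u, .) is an element of H*), with the dual norm.\<close>
definition dual_elem :: "(complex \<Rightarrow> 'a::ab_group_add \<Rightarrow> 'a) \<Rightarrow> 'a set \<Rightarrow> ('a \<Rightarrow> real) \<Rightarrow> ('a \<Rightarrow> complex) \<Rightarrow> bool" where
  "dual_elem sc S nS f \<longleftrightarrow> (\<forall>x\<in>S. \<forall>y\<in>S. f (x + y) = f x + f y) \<and>
     (\<forall>c. \<forall>x\<in>S. f (sc c x) = cnj c * f x) \<and>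
     (\<exists>K. \<forall>x\<in>S. cmod (f x) \<le> K * nS x)"

definition dual_norm :: "'a set \<Rightarrow> ('a \<Rightarrow> real) \<Rightarrow> ('a \<Rightarrow> complex) \<Rightarrow> real" where
  "dual_norm S nS f = Sup {cmod (f x) | x. x \<in> S \<and> nS x \<le> 1}"

definition aform :: "('a \<Rightarrow> 'a \<Rightarrow> complex) \<Rightarrow> ('a \<Rightarrow> 'a) \<Rightarrow> ('a \<Rightarrow> 'a \<Rightarrow> complex)
    \<Rightarrow> ('a \<Rightarrow> 'a) \<Rightarrow> ('a \<Rightarrow> 'a) \<Rightarrow> 'a \<Rightarrow> 'a \<Rightarrow> complex" where
  "aform ip0 D b muinv eps u v = ip0 (muinv (D u)) (D v) + b u v - ip0 (eps u) v"

text \<open>The operator A : H \<rightarrow> H*, A u = a(u, .), is invertible (as a bounded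
  operator H \<rightarrow> H*): bijective onto H* with bounded inverse.\<close>
definition form_op_invertible :: "(complex \<Rightarrow> 'a::ab_group_add \<Rightarrow> 'a) \<Rightarrow> 'a set \<Rightarrow> ('a \<Rightarrow> real)
    \<Rightarrow> ('a \<Rightarrow> 'a \<Rightarrow> complex) \<Rightarrow> bool" where
  "form_op_invertible sc S nS a \<longleftrightarrow>
     (\<forall>f. dual_elem sc S nS f \<longrightarrow> (\<exists>!u. u \<in> S \<and> (\<forall>v\<in>S. a u v = f v))) \<and>
     (\<exists>K. \<forall>u\<in>S. nS u \<le> K * dual_norm S nS (\<lambda>v. a u v))"

definition form_op_inv :: "'a set \<Rightarrow> ('a \<Rightarrow> 'a \<Rightarrow> complex) \<Rightarrow> ('a \<Rightarrow> complex) \<Rightarrow> 'a" where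
  "form_op_inv S a f = (THE u. u \<in> S \<and> (\<forall>v\<in>S. a u v = f v))"

definition form_op_inv_norm :: "(complex \<Rightarrow> 'a::ab_group_add \<Rightarrow> 'a) \<Rightarrow> 'a set \<Rightarrow> ('a \<Rightarrow> real)
    \<Rightarrow> ('a \<Rightarrow> 'a \<Rightarrow> complex) \<Rightarrow> real" where
  "form_op_inv_norm sc S nS a =
     Sup {nS (form_op_inv S a f) | f. dual_elem sc S nS f \<and> dual_norm S nS f \<le> 1}"

text \<open>Discrete objects. phi N j (j < N) is the basis of H_N (0-based indices).\<close>
definition combo :: "(complex \<Rightarrow> 'a::ab_group_add \<Rightarrow> 'a) \<Rightarrow> (nat \<Rightarrow> 'a) \<Rightarrow> complex vec \<Rightarrow> 'a" where
  "combo sc ph V = (\<Sum>j<dim_vec V. sc (V $ j) (ph j))"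

definition galerkin_space :: "(complex \<Rightarrow> 'a::ab_group_add \<Rightarrow> 'a) \<Rightarrow> (nat \<Rightarrow> 'a) \<Rightarrow> nat \<Rightarrow> 'a set" where
  "galerkin_space sc ph N = {combo sc ph V | V. V \<in> carrier_vec N}"

definition galerkin_mat :: "('a \<Rightarrow> 'a \<Rightarrow> complex) \<Rightarrow> (nat \<Rightarrow> 'a) \<Rightarrow> nat \<Rightarrow> complex mat" where
  "galerkin_mat a ph N = mat N N (\<lambda>(i, j). a (ph j) (ph i))"

definition ip2 :: "complex vec \<Rightarrow> complex vec \<Rightarrow> complex" where
  "ip2 V W = (\<Sum>i<dim_vec V. V $ i * cnj (W $ i))"

definition hermitian_pd :: "nat \<Rightarrow> complex mat \<Rightarrow> bool" where
  "hermitian_pd n M \<longleftrightarrow> M \<in> carrier_mat n n \<and>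
     (\<forall>i<n. \<forall>j<n. M $$ (i, j) = cnj (M $$ (j, i))) \<and>
     (\<forall>V\<in>carrier_vec n. V \<noteq> 0\<^sub>v n \<longrightarrow> 0 < Re (ip2 (M *\<^sub>v V) V))"

definition mat_inv :: "nat \<Rightarrow> complex mat \<Rightarrow> complex mat" where
  "mat_inv n A = (SOME B. B \<in> carrier_mat n n \<and> A * B = 1\<^sub>m n \<and> B * A = 1\<^sub>m n)"

definition wnorm :: "complex mat \<Rightarrow> complex vec \<Rightarrow> real" where
  "wnorm M V = sqrt (Re (ip2 (M *\<^sub>v V) V))"

definition induced_norm :: "nat \<Rightarrow> complex mat \<Rightarrow> complex mat \<Rightarrow> real" where
  "induced_norm n M A = Sup {wnorm M (A *\<^sub>v V) | V. V \<in> carrier_vec n \<and> wnorm M V \<le> 1}"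

definition norm2 :: "complex vec \<Rightarrow> real" where
  "norm2 V = sqrt (Re (ip2 V V))"

definition induced_norm2 :: "nat \<Rightarrow> complex mat \<Rightarrow> real" where
  "induced_norm2 n A = Sup {norm2 (A *\<^sub>v V) | V. V \<in> carrier_vec n \<and> norm2 V \<le> 1}"

end

theory Submission
  imports Defs "Jordan_Normal_Form.Determinant"
begin

(* The two forms differ by
     a1(u,v) - a2(u,v) = ((mu1^-1 - mu2^-1) D u, D v)_H0 - ((eps1 - eps2) u, v)_H0,
   so |a1(u,v) - a2(u,v)| <= d ||u||_H ||v||_H with d = ||mu1^-1 - mu2^-1|| + ||eps1 - eps2||,
   and the smallness hypothesis says d <= g/2 for the discrete inf-sup constant
   g = 1/(C1 ||A1^-1||) of a1.  Hence a2 satisfies a discrete inf-sup condition with constant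
   g - d >= g/2, which makes A2 injective and therefore invertible.
   The Galerkin matrices represent the forms, (A_l V, W)_2 = a_l(u_V, u_W) with
   u_V = sum_j V_j phi_j, so X = (I - A2^-1 A1) V is characterised by
   a2(u_X, .) = (a2 - a1)(u_V, .) on H_N, and the inf-sup condition for a2 bounds
   ||X||_D = ||u_X||_H by (2d/g) ||V||_D.  The bound for I - A1 A2^-1 in the D^-1 norm is the
   dual argument, based on |(W, V)_2| <= ||W||_{D^-1} ||V||_D.  If mu1 = mu2, the difference
   of the forms is controlled by the H0 norm alone, which m_- and m_+ compare with the
   Euclidean norm of the coefficient vectors. *)

lemma quadratic_nonneg_imp_cauchy_schwarz:
  fixes sxx sxy syy :: complex
  assumes nonneg: "\<And>c. 0 \<le> Re sxx + 2 * Re (cnj c * sxy) + (cmod c)\<^sup>2 * Re syy"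
    and syy: "0 \<le> Re syy"
  shows "(cmod sxy)\<^sup>2 \<le> Re sxx * Re syy"
proof -
  have sq: "cnj sxy * sxy = of_real ((cmod sxy)\<^sup>2)"
    using complex_norm_square[of sxy] by (simp add: mult.commute)
  show ?thesis
  proof (cases "Re syy = 0")
    case True
    show ?thesis
    proof (rule ccontr)
      assume "\<not> ?thesis"
      then have pos: "(cmod sxy)\<^sup>2 > 0" using True by simp
      define t where "t = (Re sxx + 1) / (2 * (cmod sxy)\<^sup>2)"
      have "Re (cnj (- of_real t * sxy) * sxy) = - t * (cmod sxy)\<^sup>2"
        using sq by (simp add: mult.assoc)
      then have "0 \<le> Re sxx - 2 * t * (cmod sxy)\<^sup>2"
        using nonneg[of "- of_real t * sxy"] True by simp
      moreover have "2 * t * (cmod sxy)\<^sup>2 = Re sxx + 1"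
        using pos unfolding t_def by (simp add: field_simps)
      ultimately show False by simp
    qed
  next
    case False
    then have pos: "Re syy > 0" using syy by simp
    define c where "c = - sxy / of_real (Re syy)"
    have "cnj c * sxy = - (cnj sxy * sxy) / of_real (Re syy)"
      unfolding c_def by simp
    then have lin: "Re (cnj c * sxy) = - (cmod sxy)\<^sup>2 / Re syy"
      unfolding sq by (simp add: Re_divide_of_real)
    have quad: "(cmod c)\<^sup>2 = (cmod sxy)\<^sup>2 / (Re syy)\<^sup>2"
      unfolding c_def using pos by (simp add: norm_divide power_divide)
    have "0 \<le> Re sxx - (cmod sxy)\<^sup>2 / Re syy"
      using nonneg[of c] unfolding lin quad using pos by (simp add: power2_eq_square field_simps)
    then show ?thesis using pos by (simp add: field_simps)
  qed
qed

definition sesquilinear_on :: "(complex \<Rightarrow> 'a::ab_group_add \<Rightarrow> 'a) \<Rightarrow> 'a set \<Rightarrow> ('a \<Rightarrow> 'a \<Rightarrow> complex) \<Rightarrow> bool" where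
  "sesquilinear_on sc S a \<longleftrightarrow>
     (\<forall>x\<in>S. \<forall>y\<in>S. \<forall>z\<in>S. a (x + y) z = a x z + a y z \<and> a z (x + y) = a z x + a z y) \<and>
     (\<forall>c. \<forall>x\<in>S. \<forall>y\<in>S. a (sc c x) y = c * a x y \<and> a x (sc c y) = cnj c * a x y)"

lemma sesquilinear_on_add_left:
  "sesquilinear_on sc S a \<Longrightarrow> x \<in> S \<Longrightarrow> y \<in> S \<Longrightarrow> z \<in> S \<Longrightarrow> a (x + y) z = a x z + a y z"
  unfolding sesquilinear_on_def by simp

lemma sesquilinear_on_add_right:
  "sesquilinear_on sc S a \<Longrightarrow> x \<in> S \<Longrightarrow> y \<in> S \<Longrightarrow> z \<in> S \<Longrightarrow> a z (x + y) = a z x + a z y"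
  unfolding sesquilinear_on_def by simp

lemma sesquilinear_on_scale_left:
  "sesquilinear_on sc S a \<Longrightarrow> x \<in> S \<Longrightarrow> y \<in> S \<Longrightarrow> a (sc c x) y = c * a x y"
  unfolding sesquilinear_on_def by simp

lemma sesquilinear_on_scale_right:
  "sesquilinear_on sc S a \<Longrightarrow> x \<in> S \<Longrightarrow> y \<in> S \<Longrightarrow> a x (sc c y) = cnj c * a x y"
  unfolding sesquilinear_on_def by simp

locale complex_vector_space = vector_space sc for sc :: "complex \<Rightarrow> 'a::ab_group_add \<Rightarrow> 'a"
begin

lemma sesquilinear_on_zero_left:
  assumes a: "sesquilinear_on sc S a" and S: "subspace S" and y: "y \<in> S"
  shows "a 0 y = 0"
  using sesquilinear_on_add_left[OF a subspace_0[OF S] subspace_0[OF S] y] by simp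

lemma sesquilinear_on_diff_left:
  assumes a: "sesquilinear_on sc S a" and S: "subspace S" and "x \<in> S" "y \<in> S" "z \<in> S"
  shows "a (x - y) z = a x z - a y z"
  using sesquilinear_on_add_left[OF a subspace_diff[OF S] _ _, of x y y z] assms by simp

lemma sesquilinear_on_sum_left:
  assumes a: "sesquilinear_on sc S a" and S: "subspace S" and "finite I"
    and x: "\<forall>i\<in>I. x i \<in> S" and y: "y \<in> S"
  shows "a (\<Sum>i\<in>I. x i) y = (\<Sum>i\<in>I. a (x i) y)"
  using \<open>finite I\<close> x
proof (induction I rule: finite_induct)
  case empty
  then show ?case using sesquilinear_on_zero_left[OF a S y] by simp
next
  case (insert i I)
  have "(\<Sum>i\<in>I. x i) \<in> S" by (rule subspace_sum[OF S]) (use insert in auto)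
  then show ?case using insert sesquilinear_on_add_left[OF a _ _ y] by simp
qed

lemma sesquilinear_on_sum_right:
  assumes a: "sesquilinear_on sc S a" and S: "subspace S" and "finite I"
    and x: "\<forall>i\<in>I. x i \<in> S" and y: "y \<in> S"
  shows "a y (\<Sum>i\<in>I. x i) = (\<Sum>i\<in>I. a y (x i))"
  using \<open>finite I\<close> x
proof (induction I rule: finite_induct)
  case empty
  have "a y (0 + 0) = a y 0 + a y 0"
    using sesquilinear_on_add_right[OF a subspace_0[OF S] subspace_0[OF S] y] .
  then show ?case by simp
next
  case (insert i I)
  have "(\<Sum>i\<in>I. x i) \<in> S" by (rule subspace_sum[OF S]) (use insert in auto)
  then show ?case using insert sesquilinear_on_add_right[OF a _ _ y] by simp
qed

lemma cinner_on_subspace: "cinner_on sc S ip \<Longrightarrow> subspace S"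
  unfolding cinner_on_def by (simp add: subspace_def)

lemma cinner_on_commute: "cinner_on sc S ip \<Longrightarrow> x \<in> S \<Longrightarrow> y \<in> S \<Longrightarrow> ip y x = cnj (ip x y)"
  unfolding cinner_on_def by blast

lemma cinner_on_nonneg: "cinner_on sc S ip \<Longrightarrow> x \<in> S \<Longrightarrow> 0 \<le> Re (ip x x)"
  unfolding cinner_on_def by blast

lemma cinner_on_sesquilinear_on:
  assumes ip: "cinner_on sc S ip"
  shows "sesquilinear_on sc S ip"
proof -
  have S: "subspace S" using cinner_on_subspace[OF ip] .
  have add: "\<And>x y z. x \<in> S \<Longrightarrow> y \<in> S \<Longrightarrow> z \<in> S \<Longrightarrow> ip (x + y) z = ip x z + ip y z"
    and scale: "\<And>c x y. x \<in> S \<Longrightarrow> y \<in> S \<Longrightarrow> ip (sc c x) y = c * ip x y"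
    using ip unfolding cinner_on_def by blast+
  note commute = cinner_on_commute[OF ip]
  have "ip z (x + y) = ip z x + ip z y" if "x \<in> S" "y \<in> S" "z \<in> S" for x y z
    using commute[of "x + y" z] commute[of x z] commute[of y z] add[of x y z] that
      subspace_add[OF S] by simp
  moreover have "ip x (sc c y) = cnj c * ip x y" if "x \<in> S" "y \<in> S" for c x y
    using commute[of "sc c y" x] commute[of y x] scale[of y x c] that
      subspace_scale[OF S] by simp
  ultimately show ?thesis unfolding sesquilinear_on_def using add scale by blast
qed

lemma ipnorm_nonneg: "cinner_on sc S ip \<Longrightarrow> x \<in> S \<Longrightarrow> 0 \<le> ipnorm ip x"
  unfolding ipnorm_def using cinner_on_nonneg by simp

lemma ipnorm_power2: "cinner_on sc S ip \<Longrightarrow> x \<in> S \<Longrightarrow> (ipnorm ip x)\<^sup>2 = Re (ip x x)"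
  unfolding ipnorm_def using cinner_on_nonneg by simp

lemma ipnorm_eq_0_iff:
  assumes ip: "cinner_on sc S ip" and x: "x \<in> S"
  shows "ipnorm ip x = 0 \<longleftrightarrow> x = 0"
proof
  assume "ipnorm ip x = 0"
  then have "Re (ip x x) = 0" unfolding ipnorm_def by simp
  moreover have "Im (ip x x) = 0"
    using arg_cong[OF cinner_on_commute[OF ip x x], of Im] by simp
  ultimately have "ip x x = 0" by (simp add: complex_eq_iff)
  then show "x = 0" using ip x unfolding cinner_on_def by blast
next
  assume "x = 0"
  then show "ipnorm ip x = 0" unfolding ipnorm_def
    using sesquilinear_on_zero_left[OF cinner_on_sesquilinear_on[OF ip] cinner_on_subspace[OF ip]
        subspace_0[OF cinner_on_subspace[OF ip]]] by simp
qed

lemma ipnorm_pos: "cinner_on sc S ip \<Longrightarrow> x \<in> S \<Longrightarrow> x \<noteq> 0 \<Longrightarrow> 0 < ipnorm ip x"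
  using ipnorm_eq_0_iff ipnorm_nonneg by (metis order_le_less)

lemma ipnorm_scale:
  assumes ip: "cinner_on sc S ip" and x: "x \<in> S"
  shows "ipnorm ip (sc c x) = cmod c * ipnorm ip x"
proof -
  note a = cinner_on_sesquilinear_on[OF ip]
  have cx: "sc c x \<in> S" using subspace_scale[OF cinner_on_subspace[OF ip] x] .
  have "ip (sc c x) (sc c x) = c * (cnj c * ip x x)"
    using sesquilinear_on_scale_left[OF a x cx] sesquilinear_on_scale_right[OF a x x] by simp
  also have "\<dots> = of_real ((cmod c)\<^sup>2) * ip x x"
    using complex_norm_square[of c] by (simp add: mult.assoc)
  finally have "Re (ip (sc c x) (sc c x)) = (cmod c)\<^sup>2 * Re (ip x x)" by simp
  then show ?thesis unfolding ipnorm_def by (simp add: real_sqrt_mult)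
qed

lemma cinner_on_expand:
  assumes ip: "cinner_on sc S ip" and x: "x \<in> S" and y: "y \<in> S"
  shows "Re (ip (x + sc c y) (x + sc c y))
    = Re (ip x x) + 2 * Re (cnj c * ip x y) + (cmod c)\<^sup>2 * Re (ip y y)"
proof -
  note a = cinner_on_sesquilinear_on[OF ip]
  have S: "subspace S" using cinner_on_subspace[OF ip] .
  have cy: "sc c y \<in> S" using subspace_scale[OF S y] .
  have xcy: "x + sc c y \<in> S" using subspace_add[OF S x cy] .
  have "ip (x + sc c y) (x + sc c y) = ip x (x + sc c y) + c * ip y (x + sc c y)"
    using sesquilinear_on_add_left[OF a x cy xcy] sesquilinear_on_scale_left[OF a y xcy] by simp
  also have "\<dots> = ip x x + cnj c * ip x y + c * (ip y x + cnj c * ip y y)"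
    using sesquilinear_on_add_right[OF a x cy x] sesquilinear_on_add_right[OF a x cy y]
      sesquilinear_on_scale_right[OF a x y] sesquilinear_on_scale_right[OF a y y] by simp
  also have "\<dots> = ip x x + cnj c * ip x y + cnj (cnj c * ip x y) + of_real ((cmod c)\<^sup>2) * ip y y"
    using cinner_on_commute[OF ip x y] complex_norm_square[of c]
    by (simp add: distrib_left mult.assoc)
  finally show ?thesis by simp
qed

lemma cinner_on_cauchy_schwarz:
  assumes ip: "cinner_on sc S ip" and x: "x \<in> S" and y: "y \<in> S"
  shows "cmod (ip x y) \<le> ipnorm ip x * ipnorm ip y"
proof -
  have S: "subspace S" using cinner_on_subspace[OF ip] .
  have "(cmod (ip x y))\<^sup>2 \<le> Re (ip x x) * Re (ip y y)"
  proof (rule quadratic_nonneg_imp_cauchy_schwarz)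
    fix c
    show "0 \<le> Re (ip x x) + 2 * Re (cnj c * ip x y) + (cmod c)\<^sup>2 * Re (ip y y)"
      using cinner_on_expand[OF ip x y, of c] cinner_on_nonneg[OF ip]
        subspace_add[OF S x subspace_scale[OF S y]] by metis
  qed (rule cinner_on_nonneg[OF ip y])
  also have "\<dots> = (ipnorm ip x * ipnorm ip y)\<^sup>2"
    using ipnorm_power2[OF ip x] ipnorm_power2[OF ip y] by (simp add: power_mult_distrib)
  finally show ?thesis
    using ipnorm_nonneg[OF ip x] ipnorm_nonneg[OF ip y] by (simp add: power2_le_iff_abs_le)
qed

lemma ipnorm_triangle:
  assumes ip: "cinner_on sc S ip" and x: "x \<in> S" and y: "y \<in> S"
  shows "ipnorm ip (x + y) \<le> ipnorm ip x + ipnorm ip y"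
proof -
  have "Re (ip x y) \<le> ipnorm ip x * ipnorm ip y"
    using complex_Re_le_cmod[of "ip x y"] cinner_on_cauchy_schwarz[OF ip x y] by linarith
  then have "(ipnorm ip (x + y))\<^sup>2 \<le> (ipnorm ip x + ipnorm ip y)\<^sup>2"
    using cinner_on_expand[OF ip x y, of 1] ipnorm_power2[OF ip] x y
      subspace_add[OF cinner_on_subspace[OF ip] x y]
    by (simp add: power2_sum)
  then show ?thesis
    using ipnorm_nonneg[OF ip x] ipnorm_nonneg[OF ip y] by (simp add: power2_le_iff_abs_le)
qed

lemma ipnorm_diff_le:
  assumes ip: "cinner_on sc S ip" and x: "x \<in> S" and y: "y \<in> S"
  shows "ipnorm ip (x - y) \<le> ipnorm ip x + ipnorm ip y"
proof -
  have "sc (-1) y \<in> S" using subspace_scale[OF cinner_on_subspace[OF ip] y] .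
  then show ?thesis
    using ipnorm_triangle[OF ip x, of "sc (-1) y"] ipnorm_scale[OF ip y, of "-1"] by simp
qed

end

lemma op_norm_bdd_above:
  fixes nS :: "'a \<Rightarrow> real" and nT :: "'b \<Rightarrow> real"
  assumes bound: "\<forall>x\<in>S. nT (f x) \<le> K * nS x" and nonneg: "\<forall>x\<in>S. 0 \<le> nS x"
  shows "bdd_above {nT (f x) | x. x \<in> S \<and> nS x \<le> 1}"
proof (rule bdd_aboveI[where M = "max K 0"])
  fix t assume "t \<in> {nT (f x) | x. x \<in> S \<and> nS x \<le> 1}"
  then obtain x where x: "x \<in> S" "nS x \<le> 1" "t = nT (f x)" by blast
  have "K * nS x \<le> max K 0 * nS x"
    using nonneg x(1) by (intro mult_right_mono) auto
  also have "\<dots> \<le> max K 0" using nonneg x by (simp add: mult_left_le)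
  finally show "t \<le> max K 0" using bound x by fastforce
qed

lemma op_norm_upper:
  fixes nS :: "'a \<Rightarrow> real" and nT :: "'b \<Rightarrow> real"
  assumes "\<forall>x\<in>S. nT (f x) \<le> K * nS x" "\<forall>x\<in>S. 0 \<le> nS x" "x \<in> S" "nS x \<le> 1"
  shows "nT (f x) \<le> op_norm S nS nT f"
  unfolding op_norm_def by (rule cSup_upper) (use assms op_norm_bdd_above[where f=f and nT=nT and nS=nS, OF assms(1,2)] in blast)+

lemma op_norm_bound:
  fixes nS :: "'a \<Rightarrow> real" and nT :: "'b \<Rightarrow> real"
  assumes bound: "\<forall>x\<in>S. nT (f x) \<le> K * nS x" and nonneg: "\<forall>x\<in>S. 0 \<le> nS x"
    and rescale: "\<forall>x\<in>S. 0 < nS x \<longrightarrow> (\<exists>y\<in>S. nS y \<le> 1 \<and> nT (f x) \<le> nT (f y) * nS x)"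
    and x: "x \<in> S"
  shows "nT (f x) \<le> op_norm S nS nT f * nS x"
proof (cases "nS x = 0")
  case True
  then show ?thesis using bound x by fastforce
next
  case False
  then have pos: "0 < nS x" using nonneg x by force
  then obtain y where y: "y \<in> S" "nS y \<le> 1" "nT (f x) \<le> nT (f y) * nS x"
    using rescale x by blast
  have "nT (f y) \<le> op_norm S nS nT f" using op_norm_upper[where f=f and nT=nT and nS=nS, OF bound nonneg y(1,2)] .
  then show ?thesis using y(3) pos by (meson mult_right_mono order_trans less_imp_le)
qed

context complex_vector_space
begin

lemma op_norm_linear_bound:
  assumes S: "cinner_on sc S ipS" and T: "cinner_on sc UNIV ipT"
    and linear: "\<forall>c. \<forall>x\<in>S. f (sc c x) = sc c (f x)"
    and bound: "\<forall>x\<in>S. ipnorm ipT (f x) \<le> K * ipnorm ipS x"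
  shows "\<forall>x\<in>S. ipnorm ipT (f x) \<le> op_norm S (ipnorm ipS) (ipnorm ipT) f * ipnorm ipS x"
    and "0 \<le> op_norm S (ipnorm ipS) (ipnorm ipT) f"
proof -
  have nonneg: "\<forall>x\<in>S. 0 \<le> ipnorm ipS x" using ipnorm_nonneg[OF S] by blast
  have "\<exists>y\<in>S. ipnorm ipS y \<le> 1 \<and> ipnorm ipT (f x) \<le> ipnorm ipT (f y) * ipnorm ipS x"
    if x: "x \<in> S" and pos: "0 < ipnorm ipS x" for x
  proof
    define y where "y = sc (of_real (1 / ipnorm ipS x)) x"
    show "y \<in> S" unfolding y_def using subspace_scale[OF cinner_on_subspace[OF S] x] .
    have "ipnorm ipS y = 1"
      unfolding y_def using ipnorm_scale[OF S x] pos by (simp add: norm_divide)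
    moreover have "ipnorm ipT (f y) = ipnorm ipT (f x) / ipnorm ipS x"
      unfolding y_def using linear x ipnorm_scale[OF T, of "f x"] pos by (simp add: norm_divide)
    ultimately show "ipnorm ipS y \<le> 1 \<and> ipnorm ipT (f x) \<le> ipnorm ipT (f y) * ipnorm ipS x"
      using pos by simp
  qed
  then show "\<forall>x\<in>S. ipnorm ipT (f x) \<le> op_norm S (ipnorm ipS) (ipnorm ipT) f * ipnorm ipS x"
    using op_norm_bound[where f=f and nT="ipnorm ipT" and nS="ipnorm ipS", OF bound nonneg] by blast
  have zero: "0 \<in> S" using subspace_0[OF cinner_on_subspace[OF S]] .
  have "ipnorm ipT (f 0) \<le> op_norm S (ipnorm ipS) (ipnorm ipT) f"
    using op_norm_upper[where f=f and nT="ipnorm ipT" and nS="ipnorm ipS", OF bound nonneg zero]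
      ipnorm_eq_0_iff[OF S zero] by simp
  then show "0 \<le> op_norm S (ipnorm ipS) (ipnorm ipT) f"
    using ipnorm_nonneg[OF T, of "f 0"] by simp
qed

lemma dual_norm_nonneg:
  assumes S: "cinner_on sc S ipS" and f: "dual_elem sc S (ipnorm ipS) f"
  shows "0 \<le> dual_norm S (ipnorm ipS) f"
proof -
  obtain K where bound: "\<forall>x\<in>S. cmod (f x) \<le> K * ipnorm ipS x"
    using f unfolding dual_elem_def by blast
  have zero: "0 \<in> S" using subspace_0[OF cinner_on_subspace[OF S]] .
  have "cmod (f 0) \<le> op_norm S (ipnorm ipS) cmod f"
    using op_norm_upper[where f=f and nT=cmod and nS="ipnorm ipS", OF bound _ zero] ipnorm_nonneg[OF S] ipnorm_eq_0_iff[OF S zero] by simp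
  then show ?thesis unfolding dual_norm_def op_norm_def by (meson norm_ge_zero order_trans)
qed

lemma combo_in_subspace:
  assumes S: "subspace S" and ph: "\<forall>j<N. ph j \<in> S" and V: "V \<in> carrier_vec N"
  shows "combo sc ph V \<in> S"
  unfolding combo_def using V ph by (intro subspace_sum[OF S] subspace_scale[OF S]) auto

lemma combo_unit_vec:
  assumes "j < N"
  shows "combo sc ph (unit_vec N j) = ph j"
proof -
  have "(\<Sum>i<N. sc (unit_vec N j $ i) (ph i)) = (\<Sum>i<N. if i = j then ph j else 0)"
    by (rule sum.cong) (auto simp: unit_vec_def)
  then show ?thesis using assms unfolding combo_def by simp
qed

lemma sesquilinear_on_combo:
  assumes a: "sesquilinear_on sc S a" and S: "subspace S" and ph: "\<forall>j<N. ph j \<in> S"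
    and V: "V \<in> carrier_vec N" and W: "W \<in> carrier_vec N"
  shows "a (combo sc ph V) (combo sc ph W) = (\<Sum>j<N. \<Sum>i<N. V $ j * cnj (W $ i) * a (ph j) (ph i))"
proof -
  have cW: "combo sc ph W \<in> S" using combo_in_subspace[OF S ph W] .
  have scaled: "\<And>j c. j < N \<Longrightarrow> sc c (ph j) \<in> S" using ph subspace_scale[OF S] by simp
  have dim: "dim_vec V = N" "dim_vec W = N" using V W by auto
  have "a (combo sc ph V) (combo sc ph W) = (\<Sum>j<N. V $ j * a (ph j) (combo sc ph W))"
    unfolding combo_def[of sc ph V] dim
    using sesquilinear_on_sum_left[OF a S finite_lessThan _ cW] scaled
      sesquilinear_on_scale_left[OF a _ cW] ph by simp
  also have "\<dots> = (\<Sum>j<N. V $ j * (\<Sum>i<N. cnj (W $ i) * a (ph j) (ph i)))"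
  proof (rule sum.cong)
    fix j assume j: "j \<in> {..<N}"
    then show "V $ j * a (ph j) (combo sc ph W) = V $ j * (\<Sum>i<N. cnj (W $ i) * a (ph j) (ph i))"
      unfolding combo_def[of sc ph W] dim
      using sesquilinear_on_sum_right[OF a S finite_lessThan, where x="\<lambda>i. sc (W $ i) (ph i)" and y="ph j"]
        sesquilinear_on_scale_right[OF a] ph scaled by simp
  qed simp
  finally show ?thesis by (simp add: sum_distrib_left mult_ac)
qed

end
lemma nonneg_square_le_mult_imp_le:
  fixes s k :: real
  assumes "0 \<le> s" "0 \<le> k" "s\<^sup>2 \<le> k * s"
  shows "s \<le> k"
  using assms by (cases "s = 0") (auto simp: power2_eq_square mult_le_cancel_right)

lemma ip2_add_left:
  "V \<in> carrier_vec n \<Longrightarrow> W \<in> carrier_vec n \<Longrightarrow> Z \<in> carrier_vec n \<Longrightarrow> ip2 (V + W) Z = ip2 V Z + ip2 W Z"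
  unfolding ip2_def by (auto simp: sum.distrib[symmetric] distrib_right intro!: sum.cong)

lemma ip2_diff_left:
  "V \<in> carrier_vec n \<Longrightarrow> W \<in> carrier_vec n \<Longrightarrow> Z \<in> carrier_vec n \<Longrightarrow> ip2 (V - W) Z = ip2 V Z - ip2 W Z"
  unfolding ip2_def by (auto simp: sum_subtractf[symmetric] left_diff_distrib intro!: sum.cong)

lemma ip2_smult_left: "V \<in> carrier_vec n \<Longrightarrow> ip2 (c \<cdot>\<^sub>v V) Z = c * ip2 V Z"
  unfolding ip2_def by (auto simp: sum_distrib_left mult.assoc intro!: sum.cong)

lemma ip2_add_right:
  "V \<in> carrier_vec n \<Longrightarrow> W \<in> carrier_vec n \<Longrightarrow> Z \<in> carrier_vec n \<Longrightarrow> ip2 Z (V + W) = ip2 Z V + ip2 Z W"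
  unfolding ip2_def by (auto simp: sum.distrib[symmetric] distrib_left intro!: sum.cong)

lemma ip2_smult_right: "V \<in> carrier_vec n \<Longrightarrow> Z \<in> carrier_vec n \<Longrightarrow> ip2 Z (c \<cdot>\<^sub>v V) = cnj c * ip2 Z V"
  unfolding ip2_def by (auto simp: sum_distrib_left mult_ac intro!: sum.cong)

lemma ip2_commute: "V \<in> carrier_vec n \<Longrightarrow> W \<in> carrier_vec n \<Longrightarrow> ip2 W V = cnj (ip2 V W)"
  unfolding ip2_def by (auto simp: mult.commute intro!: sum.cong)

lemma ip2_zero_left: "ip2 (0\<^sub>v n) W = 0"
  unfolding ip2_def by simp

lemma Re_ip2_self: "Re (ip2 V V) = (\<Sum>i<dim_vec V. (cmod (V $ i))\<^sup>2)"
  unfolding ip2_def complex_norm_square[symmetric] Re_sum by simp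

lemma ip2_self_nonneg: "0 \<le> Re (ip2 V V)"
  unfolding Re_ip2_self by (simp add: sum_nonneg)

lemma norm2_nonneg: "0 \<le> norm2 V"
  unfolding norm2_def using ip2_self_nonneg by simp

lemma norm2_power2: "(norm2 V)\<^sup>2 = Re (ip2 V V)"
  unfolding norm2_def using ip2_self_nonneg by simp

lemma ip2_mult_mat_vec:
  assumes M: "M \<in> carrier_mat n n" and V: "V \<in> carrier_vec n"
  shows "ip2 (M *\<^sub>v V) W = (\<Sum>i<n. \<Sum>j<n. M $$ (i, j) * V $ j * cnj (W $ i))"
  unfolding ip2_def using M V
  by (auto simp: scalar_prod_def atLeast0LessThan sum_distrib_right intro!: sum.cong)

lemma ip2_hermitian_swap:
  assumes M: "M \<in> carrier_mat n n" and herm: "\<forall>i<n. \<forall>j<n. M $$ (i, j) = cnj (M $$ (j, i))"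
    and V: "V \<in> carrier_vec n" and W: "W \<in> carrier_vec n"
  shows "ip2 (M *\<^sub>v V) W = cnj (ip2 (M *\<^sub>v W) V)"
proof -
  have "ip2 (M *\<^sub>v V) W = (\<Sum>i<n. \<Sum>j<n. M $$ (i, j) * V $ j * cnj (W $ i))"
    by (rule ip2_mult_mat_vec[OF M V])
  also have "\<dots> = (\<Sum>j<n. \<Sum>i<n. M $$ (i, j) * V $ j * cnj (W $ i))"
    by (rule sum.swap)
  also have "\<dots> = (\<Sum>j<n. \<Sum>i<n. cnj (M $$ (j, i) * W $ i * cnj (V $ j)))"
  proof (intro sum.cong refl)
    fix i j assume "j \<in> {..<n}" and "i \<in> {..<n}"
    then have "M $$ (i, j) = cnj (M $$ (j, i))" using herm by blast
    then show "M $$ (i, j) * V $ j * cnj (W $ i) = cnj (M $$ (j, i) * W $ i * cnj (V $ j))"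
      by (simp add: mult_ac)
  qed
  also have "\<dots> = cnj (ip2 (M *\<^sub>v W) V)"
    using ip2_mult_mat_vec[OF M W, of V] by (simp only: cnj_sum)
  finally show ?thesis .
qed

lemma hermitian_pd_nonneg: "hermitian_pd n M \<Longrightarrow> V \<in> carrier_vec n \<Longrightarrow> 0 \<le> Re (ip2 (M *\<^sub>v V) V)"
  unfolding hermitian_pd_def by (cases "V = 0\<^sub>v n") (auto simp: ip2_zero_left[unfolded ip2_def] ip2_def)

lemma wnorm_power2: "hermitian_pd n M \<Longrightarrow> V \<in> carrier_vec n \<Longrightarrow> (wnorm M V)\<^sup>2 = Re (ip2 (M *\<^sub>v V) V)"
  unfolding wnorm_def using hermitian_pd_nonneg by simp

lemma wnorm_nonneg: "hermitian_pd n M \<Longrightarrow> V \<in> carrier_vec n \<Longrightarrow> 0 \<le> wnorm M V"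
  unfolding wnorm_def using hermitian_pd_nonneg by simp

lemma hermitian_pd_expand:
  assumes pd: "hermitian_pd n M" and Z: "Z \<in> carrier_vec n" and V: "V \<in> carrier_vec n"
  shows "Re (ip2 (M *\<^sub>v (Z + c \<cdot>\<^sub>v V)) (Z + c \<cdot>\<^sub>v V))
    = Re (ip2 (M *\<^sub>v Z) Z) + 2 * Re (cnj c * ip2 (M *\<^sub>v Z) V) + (cmod c)\<^sup>2 * Re (ip2 (M *\<^sub>v V) V)"
proof -
  have M: "M \<in> carrier_mat n n" and herm: "\<forall>i<n. \<forall>j<n. M $$ (i, j) = cnj (M $$ (j, i))"
    using pd unfolding hermitian_pd_def by blast+
  have cV: "c \<cdot>\<^sub>v V \<in> carrier_vec n" using V by simp
  have MZ: "M *\<^sub>v Z \<in> carrier_vec n" and MV: "M *\<^sub>v V \<in> carrier_vec n" using M Z V by auto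
  have "M *\<^sub>v (Z + c \<cdot>\<^sub>v V) = M *\<^sub>v Z + c \<cdot>\<^sub>v (M *\<^sub>v V)"
    using mult_add_distrib_mat_vec[OF M Z cV] mult_mat_vec[OF M V] by simp
  then have "ip2 (M *\<^sub>v (Z + c \<cdot>\<^sub>v V)) (Z + c \<cdot>\<^sub>v V)
     = ip2 (M *\<^sub>v Z) (Z + c \<cdot>\<^sub>v V) + c * ip2 (M *\<^sub>v V) (Z + c \<cdot>\<^sub>v V)"
    using ip2_add_left[OF MZ, of "c \<cdot>\<^sub>v (M *\<^sub>v V)" "Z + c \<cdot>\<^sub>v V"] ip2_smult_left[OF MV] MV Z V
    by simp
  also have "\<dots> = ip2 (M *\<^sub>v Z) Z + cnj c * ip2 (M *\<^sub>v Z) V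
      + c * (ip2 (M *\<^sub>v V) Z + cnj c * ip2 (M *\<^sub>v V) V)"
    using ip2_add_right[OF Z cV MZ] ip2_add_right[OF Z cV MV]
      ip2_smult_right[OF V MZ] ip2_smult_right[OF V MV] by simp
  also have "\<dots> = ip2 (M *\<^sub>v Z) Z + cnj c * ip2 (M *\<^sub>v Z) V + cnj (cnj c * ip2 (M *\<^sub>v Z) V)
      + of_real ((cmod c)\<^sup>2) * ip2 (M *\<^sub>v V) V"
    using ip2_hermitian_swap[OF M herm V Z] complex_norm_square[of c]
    by (simp add: distrib_left mult.assoc)
  finally show ?thesis by simp
qed

lemma wnorm_cauchy_schwarz:
  assumes pd: "hermitian_pd n M" and Z: "Z \<in> carrier_vec n" and V: "V \<in> carrier_vec n"
  shows "cmod (ip2 (M *\<^sub>v Z) V) \<le> wnorm M Z * wnorm M V"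
proof -
  note nonneg = hermitian_pd_nonneg[OF pd]
  have "(cmod (ip2 (M *\<^sub>v Z) V))\<^sup>2 \<le> Re (ip2 (M *\<^sub>v Z) Z) * Re (ip2 (M *\<^sub>v V) V)"
  proof (rule quadratic_nonneg_imp_cauchy_schwarz)
    fix c
    have "Z + c \<cdot>\<^sub>v V \<in> carrier_vec n" using Z V by simp
    then show "0 \<le> Re (ip2 (M *\<^sub>v Z) Z) + 2 * Re (cnj c * ip2 (M *\<^sub>v Z) V)
        + (cmod c)\<^sup>2 * Re (ip2 (M *\<^sub>v V) V)"
      using nonneg hermitian_pd_expand[OF pd Z V, of c] by metis
  qed (rule nonneg[OF V])
  also have "\<dots> = (wnorm M Z * wnorm M V)\<^sup>2"
    unfolding wnorm_def using nonneg Z V by (simp add: power_mult_distrib)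
  finally show ?thesis
    unfolding wnorm_def using nonneg Z V by (simp add: power2_le_iff_abs_le)
qed

lemma hermitian_pd_one: "hermitian_pd n (1\<^sub>m n)"
  unfolding hermitian_pd_def
proof (intro conjI ballI allI impI)
  fix V :: "complex vec" assume V: "V \<in> carrier_vec n" and nonzero: "V \<noteq> 0\<^sub>v n"
  then obtain i where i: "i < n" "V $ i \<noteq> 0" by (metis eq_vecI carrier_vecD index_zero_vec)
  have "0 < (cmod (V $ i))\<^sup>2" using i by simp
  also have "\<dots> \<le> (\<Sum>j<n. (cmod (V $ j))\<^sup>2)" using i by (intro member_le_sum) auto
  finally show "0 < Re (ip2 (1\<^sub>m n *\<^sub>v V) V)" using V Re_ip2_self[of V] by simp
qed auto

lemma wnorm_one: "V \<in> carrier_vec n \<Longrightarrow> wnorm (1\<^sub>m n) V = norm2 V"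
  unfolding wnorm_def norm2_def by simp

lemma norm2_cauchy_schwarz:
  assumes "Z \<in> carrier_vec n" "V \<in> carrier_vec n"
  shows "cmod (ip2 Z V) \<le> norm2 Z * norm2 V"
  using wnorm_cauchy_schwarz[OF hermitian_pd_one assms] assms wnorm_one by simp

lemma induced_norm_le:
  assumes M: "M \<in> carrier_mat n n"
    and bound: "\<forall>V\<in>carrier_vec n. wnorm M V \<le> 1 \<longrightarrow> wnorm M (A *\<^sub>v V) \<le> B"
  shows "induced_norm n M A \<le> B"
  unfolding induced_norm_def
proof (rule cSup_least)
  have "wnorm M (0\<^sub>v n) = 0"
    unfolding wnorm_def ip2_def using M by (auto intro!: sum.neutral)
  then show "{wnorm M (A *\<^sub>v V) |V. V \<in> carrier_vec n \<and> wnorm M V \<le> 1} \<noteq> {}"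
    by (auto intro!: exI[of _ "0\<^sub>v n"])
qed (use bound in auto)

lemma induced_norm2_le:
  assumes "\<forall>V\<in>carrier_vec n. norm2 V \<le> 1 \<longrightarrow> norm2 (A *\<^sub>v V) \<le> B"
  shows "induced_norm2 n A \<le> B"
  unfolding induced_norm2_def
proof (rule cSup_least)
  have "norm2 (0\<^sub>v n) = 0" unfolding norm2_def ip2_def by simp
  then show "{norm2 (A *\<^sub>v V) |V. V \<in> carrier_vec n \<and> norm2 V \<le> 1} \<noteq> {}"
    by (auto intro!: exI[of _ "0\<^sub>v n"])
qed (use assms in auto)

lemma mat_inv_of_kernel_trivial:
  assumes A: "(A :: complex mat) \<in> carrier_mat n n"
    and kernel: "\<forall>X\<in>carrier_vec n. A *\<^sub>v X = 0\<^sub>v n \<longrightarrow> X = 0\<^sub>v n"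
  shows "mat_inv n A \<in> carrier_mat n n" "A * mat_inv n A = 1\<^sub>m n" "mat_inv n A * A = 1\<^sub>m n"
    "invertible_mat A"
proof -
  have "det A \<noteq> 0" using det_0_iff_vec_prod_zero[OF A] kernel by blast
  then have "A \<in> Units (ring_mat TYPE(complex) n ())" by (rule det_non_zero_imp_unit[OF A])
  then have "\<exists>B. B \<in> carrier_mat n n \<and> A * B = 1\<^sub>m n \<and> B * A = 1\<^sub>m n"
    unfolding Units_def ring_mat_simps by auto
  then have inv: "mat_inv n A \<in> carrier_mat n n \<and> A * mat_inv n A = 1\<^sub>m n \<and> mat_inv n A * A = 1\<^sub>m n"
    unfolding mat_inv_def by (rule someI_ex)
  then show "mat_inv n A \<in> carrier_mat n n" "A * mat_inv n A = 1\<^sub>m n" "mat_inv n A * A = 1\<^sub>m n"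
    by auto
  show "invertible_mat A" unfolding invertible_mat_def inverts_mat_def
    using inv A by (intro conjI exI[of _ "mat_inv n A"]) auto
qed

lemma (in complex_vector_space) ip2_galerkin_mat:
  assumes a: "sesquilinear_on sc S a" and S: "subspace S" and ph: "\<forall>j<N. ph j \<in> S"
    and V: "V \<in> carrier_vec N" and W: "W \<in> carrier_vec N"
  shows "ip2 (galerkin_mat a ph N *\<^sub>v V) W = a (combo sc ph V) (combo sc ph W)"
proof -
  have "ip2 (galerkin_mat a ph N *\<^sub>v V) W = (\<Sum>i<N. \<Sum>j<N. a (ph j) (ph i) * V $ j * cnj (W $ i))"
    using ip2_mult_mat_vec[OF _ V, of "galerkin_mat a ph N" W] by (simp add: galerkin_mat_def)
  also have "\<dots> = (\<Sum>j<N. \<Sum>i<N. V $ j * cnj (W $ i) * a (ph j) (ph i))"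
    by (subst sum.swap) (simp add: mult_ac)
  finally show ?thesis using sesquilinear_on_combo[OF a S ph V W] by simp
qed

locale galerkin_perturbation = complex_vector_space sc for sc :: "complex \<Rightarrow> 'a::ab_group_add \<Rightarrow> 'a" +
  fixes ipH :: "'a \<Rightarrow> 'a \<Rightarrow> complex" and H :: "'a set" and a1 a2 :: "'a \<Rightarrow> 'a \<Rightarrow> complex"
    and ph :: "nat \<Rightarrow> 'a" and N :: nat and DD :: "complex mat" and g d :: real
  assumes ipH: "cinner_on sc H ipH"
    and a1: "sesquilinear_on sc H a1" and a2: "sesquilinear_on sc H a2"
    and diff_bound: "\<forall>u\<in>H. \<forall>v\<in>H. cmod (a1 u v - a2 u v) \<le> d * ipnorm ipH u * ipnorm ipH v"
    and ph_in: "\<forall>j<N. ph j \<in> H"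
    and ph_indep: "\<forall>V\<in>carrier_vec N. combo sc ph V = 0 \<longrightarrow> V = 0\<^sub>v N"
    and DD_pd: "hermitian_pd N DD"
    and DD_norm: "\<forall>V\<in>carrier_vec N. ipnorm ipH (combo sc ph V) = wnorm DD V"
    and infsup: "ereal g \<le> (INF u\<in>galerkin_space sc ph N - {0}. SUP v\<in>galerkin_space sc ph N - {0}.
        ereal (cmod (a1 u v) / (ipnorm ipH u * ipnorm ipH v)))"
    and g_pos: "0 < g" and d_nonneg: "0 \<le> d" and d_small: "d \<le> g / 2"
begin

abbreviation "nH \<equiv> ipnorm ipH"
abbreviation "lift V \<equiv> combo sc ph V"
abbreviation "A1 \<equiv> galerkin_mat a1 ph N"
abbreviation "A2 \<equiv> galerkin_mat a2 ph N"

lemma H_subspace: "subspace H"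
  using cinner_on_subspace[OF ipH] .

lemma lift_in_H: "V \<in> carrier_vec N \<Longrightarrow> lift V \<in> H"
  using combo_in_subspace[OF H_subspace ph_in] .

lemma nH_lift_nonneg: "V \<in> carrier_vec N \<Longrightarrow> 0 \<le> nH (lift V)"
  using ipnorm_nonneg[OF ipH lift_in_H] .

lemma A1_carrier: "A1 \<in> carrier_mat N N" and A2_carrier: "A2 \<in> carrier_mat N N"
  unfolding galerkin_mat_def by simp_all

lemma DD_carrier: "DD \<in> carrier_mat N N"
  using DD_pd unfolding hermitian_pd_def by blast

lemma ip2_A1: "V \<in> carrier_vec N \<Longrightarrow> W \<in> carrier_vec N \<Longrightarrow> ip2 (A1 *\<^sub>v V) W = a1 (lift V) (lift W)"
  using ip2_galerkin_mat[OF a1 H_subspace ph_in] .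

lemma ip2_A2: "V \<in> carrier_vec N \<Longrightarrow> W \<in> carrier_vec N \<Longrightarrow> ip2 (A2 *\<^sub>v V) W = a2 (lift V) (lift W)"
  using ip2_galerkin_mat[OF a2 H_subspace ph_in] .

lemma infsup_witness:
  assumes w: "w \<in> galerkin_space sc ph N - {0}" and e: "0 < e"
  obtains v where "v \<in> galerkin_space sc ph N - {0}" "(g - e) * nH w * nH v < cmod (a1 w v)"
proof -
  have nH_pos: "0 < nH x" if "x \<in> galerkin_space sc ph N - {0}" for x
    using that lift_in_H ipnorm_pos[OF ipH] unfolding galerkin_space_def by auto
  have "ereal (g - e) < ereal g" using e by simp
  also have "\<dots> \<le> (SUP v\<in>galerkin_space sc ph N - {0}. ereal (cmod (a1 w v) / (nH w * nH v)))"
    using infsup w by (meson INF_lower order_trans)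
  finally obtain v where v: "v \<in> galerkin_space sc ph N - {0}"
    and less: "g - e < cmod (a1 w v) / (nH w * nH v)"
    unfolding less_SUP_iff by auto
  have "(g - e) * nH w * nH v < cmod (a1 w v)"
    using less nH_pos[OF w] nH_pos[OF v] by (simp add: pos_less_divide_eq mult.assoc)
  with v show ?thesis by (rule that)
qed

text \<open>The discrete inf-sup condition passes from a1 to a2 with constant g - d \<ge> g/2.\<close>
lemma a2_stability:
  assumes X: "X \<in> carrier_vec N" and c: "0 \<le> c"
    and bound: "\<forall>W\<in>carrier_vec N. cmod (a2 (lift X) (lift W)) \<le> c * nH (lift W)"
  shows "nH (lift X) \<le> 2 * c / g"
proof (cases "lift X = 0")
  case True
  then show ?thesis using ipnorm_eq_0_iff[OF ipH lift_in_H[OF X]] c g_pos by simp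
next
  case False
  have pos: "0 < nH (lift X)" using ipnorm_pos[OF ipH lift_in_H[OF X] False] .
  have X_space: "lift X \<in> galerkin_space sc ph N - {0}"
    unfolding galerkin_space_def using X False by blast
  have "(g - d) * nH (lift X) \<le> c"
  proof (rule field_le_epsilon)
    fix e :: real assume e: "0 < e"
    obtain v where v: "v \<in> galerkin_space sc ph N - {0}"
      and less: "(g - e / nH (lift X)) * nH (lift X) * nH v < cmod (a1 (lift X) v)"
      using infsup_witness[OF X_space] e pos by (metis divide_pos_pos)
    obtain W where W: "W \<in> carrier_vec N" and vW: "v = lift W"
      using v unfolding galerkin_space_def by blast
    have v_pos: "0 < nH v" using ipnorm_pos[OF ipH lift_in_H[OF W]] v vW by simp
    have "cmod (a1 (lift X) v) \<le> cmod (a2 (lift X) v) + cmod (a1 (lift X) v - a2 (lift X) v)"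
      by (metis add.commute diff_add_cancel norm_triangle_ineq)
    also have "\<dots> \<le> c * nH v + d * nH (lift X) * nH v"
      using bound W vW diff_bound lift_in_H[OF X] lift_in_H[OF W] by (intro add_mono) auto
    finally have "(g - e / nH (lift X)) * nH (lift X) * nH v < (c + d * nH (lift X)) * nH v"
      using less by (simp add: algebra_simps)
    then have "(g - e / nH (lift X)) * nH (lift X) < c + d * nH (lift X)"
      using v_pos by (simp add: mult_less_cancel_right)
    then show "(g - d) * nH (lift X) \<le> c + e"
      using pos by (simp add: algebra_simps)
  qed
  moreover have "g / 2 * nH (lift X) \<le> (g - d) * nH (lift X)"
    using d_small pos by (intro mult_right_mono) auto
  ultimately show ?thesis using g_pos by (simp add: field_simps)
qed

lemma A2_kernel_trivial: "\<forall>X\<in>carrier_vec N. A2 *\<^sub>v X = 0\<^sub>v N \<longrightarrow> X = 0\<^sub>v N"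
proof (intro ballI impI)
  fix X :: "complex vec" assume X: "X \<in> carrier_vec N" and zero: "A2 *\<^sub>v X = 0\<^sub>v N"
  have "\<forall>W\<in>carrier_vec N. cmod (a2 (lift X) (lift W)) \<le> 0 * nH (lift W)"
    using ip2_A2[OF X] zero ip2_zero_left by simp
  then have "nH (lift X) \<le> 0" using a2_stability[OF X] by fastforce
  then have "lift X = 0" using ipnorm_eq_0_iff[OF ipH lift_in_H[OF X]] nH_lift_nonneg[OF X] by simp
  then show "X = 0\<^sub>v N" using ph_indep X by blast
qed

lemma DD_kernel_trivial: "\<forall>X\<in>carrier_vec N. DD *\<^sub>v X = 0\<^sub>v N \<longrightarrow> X = 0\<^sub>v N"
proof (intro ballI impI)
  fix X :: "complex vec" assume X: "X \<in> carrier_vec N" and zero: "DD *\<^sub>v X = 0\<^sub>v N"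
  have "wnorm DD X = 0" unfolding wnorm_def zero ip2_zero_left by simp
  then have "lift X = 0" using ipnorm_eq_0_iff[OF ipH lift_in_H[OF X]] DD_norm X by simp
  then show "X = 0\<^sub>v N" using ph_indep X by blast
qed

abbreviation "A2i \<equiv> mat_inv N A2"
abbreviation "DDi \<equiv> mat_inv N DD"

lemmas A2_inverse = mat_inv_of_kernel_trivial[OF A2_carrier A2_kernel_trivial]
lemmas DD_inverse = mat_inv_of_kernel_trivial[OF DD_carrier DD_kernel_trivial]

lemma DD_DDi_mult_vec: "Y \<in> carrier_vec N \<Longrightarrow> DD *\<^sub>v (DDi *\<^sub>v Y) = Y"
  using assoc_mult_mat_vec[OF DD_carrier DD_inverse(1)] DD_inverse(2) by simp

lemma wnorm_DDi: 
  assumes Y: "Y \<in> carrier_vec N"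
  shows "wnorm DD (DDi *\<^sub>v Y) = wnorm DDi Y"
proof -
  have "ip2 (DD *\<^sub>v (DDi *\<^sub>v Y)) (DDi *\<^sub>v Y) = cnj (ip2 (DDi *\<^sub>v Y) Y)"
    using DD_DDi_mult_vec[OF Y] ip2_commute[OF Y, of "DDi *\<^sub>v Y"] DD_inverse(1) Y by simp
  then show ?thesis unfolding wnorm_def by simp
qed

lemma dual_cauchy_schwarz:
  assumes W: "W \<in> carrier_vec N" and V: "V \<in> carrier_vec N"
  shows "cmod (ip2 W V) \<le> wnorm DDi W * wnorm DD V"
  using wnorm_cauchy_schwarz[OF DD_pd _ V, of "DDi *\<^sub>v W"] DD_DDi_mult_vec[OF W]
    wnorm_DDi[OF W] DD_inverse(1) W by simp

end

context galerkin_perturbation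
begin

lemma left_residual:
  assumes V: "V \<in> carrier_vec N"
  shows "(1\<^sub>m N - A2i * A1) *\<^sub>v V \<in> carrier_vec N"
    and "\<forall>W\<in>carrier_vec N. a2 (lift ((1\<^sub>m N - A2i * A1) *\<^sub>v V)) (lift W)
           = a2 (lift V) (lift W) - a1 (lift V) (lift W)"
proof -
  define M where "M = 1\<^sub>m N - A2i * A1"
  have M: "M \<in> carrier_mat N N"
    unfolding M_def using A2_inverse(1) A1_carrier by (intro minus_carrier_mat) auto
  then show "(1\<^sub>m N - A2i * A1) *\<^sub>v V \<in> carrier_vec N" using V unfolding M_def by simp
  have "A2 * M = A2 * 1\<^sub>m N - A2 * (A2i * A1)"
    unfolding M_def using A2_carrier A2_inverse(1) A1_carrier by (subst mult_minus_distrib_mat) auto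
  also have "\<dots> = A2 - A1"
    using A2_carrier A2_inverse A1_carrier
    by (simp add: assoc_mult_mat[symmetric, of A2 N N A2i N A1 N])
  finally have "A2 *\<^sub>v (M *\<^sub>v V) = A2 *\<^sub>v V - A1 *\<^sub>v V"
    using assoc_mult_mat_vec[OF A2_carrier M V] minus_mult_distrib_mat_vec[OF A2_carrier A1_carrier V]
    by simp
  then show "\<forall>W\<in>carrier_vec N. a2 (lift ((1\<^sub>m N - A2i * A1) *\<^sub>v V)) (lift W)
      = a2 (lift V) (lift W) - a1 (lift V) (lift W)"
    using ip2_A2[of "M *\<^sub>v V"] ip2_A1[OF V] ip2_A2[OF V] ip2_diff_left[of "A2 *\<^sub>v V" N "A1 *\<^sub>v V"]
      M V A1_carrier A2_carrier unfolding M_def by simp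
qed

lemma right_residual:
  assumes W: "W \<in> carrier_vec N"
  shows "A2i *\<^sub>v W \<in> carrier_vec N" and "(1\<^sub>m N - A1 * A2i) *\<^sub>v W \<in> carrier_vec N"
    and "\<forall>V\<in>carrier_vec N. a2 (lift (A2i *\<^sub>v W)) (lift V) = ip2 W V"
    and "\<forall>Z\<in>carrier_vec N. ip2 ((1\<^sub>m N - A1 * A2i) *\<^sub>v W) Z
           = a2 (lift (A2i *\<^sub>v W)) (lift Z) - a1 (lift (A2i *\<^sub>v W)) (lift Z)"
proof -
  define X where "X = A2i *\<^sub>v W"
  show X: "A2i *\<^sub>v W \<in> carrier_vec N" using A2_inverse(1) W by simp
  have A2X: "A2 *\<^sub>v X = W"
    unfolding X_def using assoc_mult_mat_vec[OF A2_carrier A2_inverse(1) W] A2_inverse(2) W by simp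
  have Y: "(1\<^sub>m N - A1 * A2i) *\<^sub>v W = W - A1 *\<^sub>v X"
    unfolding X_def using A1_carrier A2_inverse(1) W
    by (simp add: minus_mult_distrib_mat_vec[of _ N N _ W] assoc_mult_mat_vec[of _ N N _ N W])
  show "(1\<^sub>m N - A1 * A2i) *\<^sub>v W \<in> carrier_vec N" unfolding Y using W A1_carrier X X_def by simp
  show "\<forall>V\<in>carrier_vec N. a2 (lift (A2i *\<^sub>v W)) (lift V) = ip2 W V"
    using ip2_A2[OF X] A2X unfolding X_def by simp
  show "\<forall>Z\<in>carrier_vec N. ip2 ((1\<^sub>m N - A1 * A2i) *\<^sub>v W) Z
      = a2 (lift (A2i *\<^sub>v W)) (lift Z) - a1 (lift (A2i *\<^sub>v W)) (lift Z)"
    using ip2_diff_left[OF W, of "A1 *\<^sub>v X"] ip2_A1[OF X] ip2_A2[OF X] A2X A1_carrier X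
    unfolding Y X_def[symmetric] by simp
qed

lemma induced_norm_left_residual_le: "induced_norm N DD (1\<^sub>m N - A2i * A1) \<le> 2 * d / g"
proof (rule induced_norm_le[OF DD_carrier], intro ballI impI)
  fix V :: "complex vec" assume V: "V \<in> carrier_vec N" and V1: "wnorm DD V \<le> 1"
  define X where "X = (1\<^sub>m N - A2i * A1) *\<^sub>v V"
  note residual = left_residual[OF V, folded X_def]
  have "cmod (a2 (lift X) (lift W)) \<le> d * nH (lift W)" if W: "W \<in> carrier_vec N" for W
  proof -
    have "cmod (a2 (lift X) (lift W)) = cmod (a1 (lift V) (lift W) - a2 (lift V) (lift W))"
      using residual W by (simp add: norm_minus_commute)
    also have "\<dots> \<le> d * nH (lift V) * nH (lift W)"
      using diff_bound lift_in_H[OF V] lift_in_H[OF W] by blast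
    also have "\<dots> \<le> d * 1 * nH (lift W)"
      using DD_norm V V1 d_nonneg nH_lift_nonneg[OF W] by (intro mult_right_mono mult_left_mono) auto
    finally show ?thesis by simp
  qed
  then have "nH (lift X) \<le> 2 * d / g" using a2_stability[OF residual(1) d_nonneg] by blast
  then show "wnorm DD (X) \<le> 2 * d / g" using DD_norm residual(1) by simp
qed

lemma induced_norm_right_residual_le: "induced_norm N DDi (1\<^sub>m N - A1 * A2i) \<le> 2 * d / g"
proof (rule induced_norm_le[OF DD_inverse(1)], intro ballI impI)
  fix W :: "complex vec" assume W: "W \<in> carrier_vec N" and W1: "wnorm DDi W \<le> 1"
  define X where "X = A2i *\<^sub>v W"
  define Y where "Y = (1\<^sub>m N - A1 * A2i) *\<^sub>v W"
  note residual = right_residual[OF W, folded X_def Y_def]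
  have "cmod (a2 (lift X) (lift V)) \<le> 1 * nH (lift V)" if V: "V \<in> carrier_vec N" for V
    using residual(3) dual_cauchy_schwarz[OF W V] mult_right_mono[OF W1 nH_lift_nonneg[OF V]]
      DD_norm V by simp
  then have X_bound: "nH (lift X) \<le> 2 * 1 / g" by (intro a2_stability[OF residual(1)]) auto
  \<comment> \<open>test the residual against its Riesz representative DDi Y\<close>
  define Z where "Z = DDi *\<^sub>v Y"
  have Z: "Z \<in> carrier_vec N" unfolding Z_def using DD_inverse(1) residual(2) by simp
  have "(wnorm DDi Y)\<^sup>2 = Re (ip2 Y Z)"
    using wnorm_power2[OF DD_pd Z] wnorm_DDi[OF residual(2)] DD_DDi_mult_vec[OF residual(2)]
    unfolding Z_def by simp
  also have "\<dots> \<le> cmod (a1 (lift X) (lift Z) - a2 (lift X) (lift Z))"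
    using residual(4) Z complex_Re_le_cmod[of "a2 (lift X) (lift Z) - a1 (lift X) (lift Z)"]
    by (simp add: norm_minus_commute)
  also have "\<dots> \<le> d * nH (lift X) * wnorm DDi Y"
    using diff_bound[rule_format, OF lift_in_H[OF residual(1)] lift_in_H[OF Z]] DD_norm Z
      wnorm_DDi[OF residual(2)] unfolding Z_def by simp
  finally have square: "(wnorm DDi Y)\<^sup>2 \<le> d * nH (lift X) * wnorm DDi Y" .
  have "0 \<le> wnorm DDi Y"
    using wnorm_nonneg[OF DD_pd Z] wnorm_DDi[OF residual(2)] unfolding Z_def by simp
  then have "wnorm DDi Y \<le> d * nH (lift X)"
    using mult_nonneg_nonneg[OF d_nonneg nH_lift_nonneg[OF residual(1)]] square
    by (rule nonneg_square_le_mult_imp_le)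
  also have "\<dots> \<le> 2 * d / g" using mult_left_mono[OF X_bound d_nonneg] by (simp add: mult.commute)
  finally show "wnorm DDi ((1\<^sub>m N - A1 * A2i) *\<^sub>v W) \<le> 2 * d / g" unfolding Y_def .
qed

end

locale galerkin_perturbation_euclidean = galerkin_perturbation +
  fixes ip0 :: "'a \<Rightarrow> 'a \<Rightarrow> complex" and e mm mp :: real
  assumes ip0: "cinner_on sc UNIV ip0"
    and norm_le: "\<forall>v\<in>H. ipnorm ip0 v \<le> ipnorm ipH v"
    and diff_bound0: "\<forall>u\<in>H. \<forall>v\<in>H. cmod (a1 u v - a2 u v) \<le> e * ipnorm ip0 u * ipnorm ip0 v"
    and e_nonneg: "0 \<le> e" and mm_pos: "0 < mm" and mp_nonneg: "0 \<le> mp"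
    and m_bounds: "\<forall>V\<in>carrier_vec N.
      mm * norm2 V \<le> ipnorm ip0 (combo sc ph V) \<and> ipnorm ip0 (combo sc ph V) \<le> mp * norm2 V"
begin

abbreviation "n0 \<equiv> ipnorm ip0"

lemma n0_le_nH: "V \<in> carrier_vec N \<Longrightarrow> n0 (lift V) \<le> nH (lift V)"
  using norm_le lift_in_H by blast

lemma norm2_le_nH: "V \<in> carrier_vec N \<Longrightarrow> norm2 V \<le> nH (lift V) / mm"
  using m_bounds n0_le_nH mm_pos by (fastforce simp: field_simps)

lemma induced_norm2_left_residual_le: "induced_norm2 N (1\<^sub>m N - A2i * A1) \<le> 2 * (mp / mm) * e / g"
proof (rule induced_norm2_le, intro ballI impI)
  fix V :: "complex vec" assume V: "V \<in> carrier_vec N" and V1: "norm2 V \<le> 1"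
  define X where "X = (1\<^sub>m N - A2i * A1) *\<^sub>v V"
  note residual = left_residual[OF V, folded X_def]
  have V_bound: "n0 (lift V) \<le> mp"
    using m_bounds V mult_left_mono[OF V1 mp_nonneg] by fastforce
  have "cmod (a2 (lift X) (lift W)) \<le> (e * mp) * nH (lift W)" if W: "W \<in> carrier_vec N" for W
  proof -
    have "cmod (a2 (lift X) (lift W)) = cmod (a1 (lift V) (lift W) - a2 (lift V) (lift W))"
      using residual W by (simp add: norm_minus_commute)
    also have "\<dots> \<le> e * n0 (lift V) * n0 (lift W)"
      using diff_bound0 lift_in_H[OF V] lift_in_H[OF W] by blast
    also have "\<dots> \<le> e * mp * nH (lift W)"
      using V_bound n0_le_nH[OF W] e_nonneg mp_nonneg ipnorm_nonneg[OF ip0]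
      by (simp add: mult.assoc mult_left_mono mult_mono)
    finally show ?thesis .
  qed
  then have "nH (lift X) \<le> 2 * (e * mp) / g"
    using e_nonneg mp_nonneg by (intro a2_stability[OF residual(1)]) auto
  then have "norm2 X \<le> 2 * (e * mp) / g / mm"
    using norm2_le_nH[OF residual(1)] mm_pos by (meson divide_right_mono order_trans less_imp_le)
  then show "norm2 X \<le> 2 * (mp / mm) * e / g" by (simp add: field_simps)
qed

lemma induced_norm2_right_residual_le: "induced_norm2 N (1\<^sub>m N - A1 * A2i) \<le> 2 * (mp / mm) * e / g"
proof (rule induced_norm2_le, intro ballI impI)
  fix W :: "complex vec" assume W: "W \<in> carrier_vec N" and W1: "norm2 W \<le> 1"
  define X where "X = A2i *\<^sub>v W"
  define Y where "Y = (1\<^sub>m N - A1 * A2i) *\<^sub>v W"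
  note residual = right_residual[OF W, folded X_def Y_def]
  have "cmod (a2 (lift X) (lift V)) \<le> (1 / mm) * nH (lift V)" if V: "V \<in> carrier_vec N" for V
  proof -
    have "cmod (a2 (lift X) (lift V)) \<le> norm2 W * norm2 V"
      using residual(3) norm2_cauchy_schwarz[OF W V] V by simp
    also have "\<dots> \<le> norm2 V" using mult_right_mono[OF W1 norm2_nonneg[of V]] by simp
    also have "\<dots> \<le> nH (lift V) / mm" by (rule norm2_le_nH[OF V])
    finally show ?thesis by simp
  qed
  then have X_bound: "nH (lift X) \<le> 2 * (1 / mm) / g"
    using mm_pos by (intro a2_stability[OF residual(1)]) auto
  have "(norm2 Y)\<^sup>2 \<le> cmod (a1 (lift X) (lift Y) - a2 (lift X) (lift Y))"
    using residual(4) residual(2) norm2_power2[of Y]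
      complex_Re_le_cmod[of "a2 (lift X) (lift Y) - a1 (lift X) (lift Y)"]
    by (simp add: norm_minus_commute)
  also have "\<dots> \<le> e * n0 (lift X) * n0 (lift Y)"
    using diff_bound0 lift_in_H[OF residual(1)] lift_in_H[OF residual(2)] by blast
  also have "\<dots> \<le> (e * nH (lift X) * mp) * norm2 Y"
  proof -
    have "n0 (lift X) * n0 (lift Y) \<le> nH (lift X) * (mp * norm2 Y)"
      using n0_le_nH[OF residual(1)] m_bounds residual(2) ipnorm_nonneg[OF ip0]
        nH_lift_nonneg[OF residual(1)] by (intro mult_mono) auto
    then show ?thesis using e_nonneg by (simp add: mult.assoc mult_left_mono)
  qed
  finally have "norm2 Y \<le> e * nH (lift X) * mp"
    using nonneg_square_le_mult_imp_le[OF norm2_nonneg]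
      mult_nonneg_nonneg[OF mult_nonneg_nonneg[OF e_nonneg nH_lift_nonneg[OF residual(1)]] mp_nonneg]
    by blast
  also have "\<dots> \<le> e * (2 * (1 / mm) / g) * mp"
    using X_bound e_nonneg mp_nonneg by (intro mult_right_mono mult_left_mono) auto
  finally show "norm2 ((1\<^sub>m N - A1 * A2i) *\<^sub>v W) \<le> 2 * (mp / mm) * e / g"
    unfolding Y_def by (simp add: field_simps)
qed

end

context complex_vector_space
begin

lemma aform_sesquilinear_on:
  assumes ip0: "cinner_on sc UNIV ip0" and D: "clinear_on sc H D"
    and mu: "clinear_on sc UNIV mu" and eps: "clinear_on sc UNIV eps"
    and b: "bdd_sesq_on sc H nH b"
  shows "sesquilinear_on sc H (aform ip0 D b mu eps)"
proof -
  note ip = cinner_on_sesquilinear_on[OF ip0]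
  have "\<And>x y z. ip0 (x + y) z = ip0 x z + ip0 y z" "\<And>x y z. ip0 z (x + y) = ip0 z x + ip0 z y"
    "\<And>c x y. ip0 (sc c x) y = c * ip0 x y" "\<And>c x y. ip0 x (sc c y) = cnj c * ip0 x y"
    using sesquilinear_on_add_left[OF ip] sesquilinear_on_add_right[OF ip]
      sesquilinear_on_scale_left[OF ip] sesquilinear_on_scale_right[OF ip] by simp_all
  then show ?thesis
    using D mu eps b unfolding sesquilinear_on_def aform_def clinear_on_def bdd_sesq_on_def
    by (simp add: algebra_simps)
qed

lemma aform_diff:
  assumes ip0: "cinner_on sc UNIV ip0"
  shows "aform ip0 D b mu1 eps1 u v - aform ip0 D b mu2 eps2 u v
    = ip0 (mu1 (D u) - mu2 (D u)) (D v) - ip0 (eps1 u - eps2 u) v"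
  using sesquilinear_on_diff_left[OF cinner_on_sesquilinear_on[OF ip0] cinner_on_subspace[OF ip0]]
  unfolding aform_def by simp

lemma aform_diff_le:
  assumes ip0: "cinner_on sc UNIV ip0"
    and mu: "\<forall>x. ipnorm ip0 (mu1 x - mu2 x) \<le> dmu * ipnorm ip0 x"
    and eps: "\<forall>x. ipnorm ip0 (eps1 x - eps2 x) \<le> deps * ipnorm ip0 x"
  shows "cmod (aform ip0 D b mu1 eps1 u v - aform ip0 D b mu2 eps2 u v)
    \<le> dmu * ipnorm ip0 (D u) * ipnorm ip0 (D v) + deps * ipnorm ip0 u * ipnorm ip0 v"
proof -
  note n0 = ipnorm_nonneg[OF ip0]
  have "cmod (aform ip0 D b mu1 eps1 u v - aform ip0 D b mu2 eps2 u v)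
      \<le> cmod (ip0 (mu1 (D u) - mu2 (D u)) (D v)) + cmod (ip0 (eps1 u - eps2 u) v)"
    unfolding aform_diff[OF ip0] by (rule norm_triangle_ineq4)
  also have "\<dots> \<le> ipnorm ip0 (mu1 (D u) - mu2 (D u)) * ipnorm ip0 (D v)
      + ipnorm ip0 (eps1 u - eps2 u) * ipnorm ip0 v"
    using cinner_on_cauchy_schwarz[OF ip0] by (intro add_mono) auto
  also have "\<dots> \<le> dmu * ipnorm ip0 (D u) * ipnorm ip0 (D v) + deps * ipnorm ip0 u * ipnorm ip0 v"
    using mu eps n0 by (intro add_mono mult_right_mono) auto
  finally show ?thesis .
qed

lemma bounded_op_diff_bound:
  assumes ip0: "cinner_on sc UNIV ip0"
    and f1: "clinear_on sc UNIV f1 \<and> bounded_op UNIV (ipnorm ip0) (ipnorm ip0) f1"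
    and f2: "clinear_on sc UNIV f2 \<and> bounded_op UNIV (ipnorm ip0) (ipnorm ip0) f2"
  defines "K \<equiv> op_norm UNIV (ipnorm ip0) (ipnorm ip0) (\<lambda>x. f1 x - f2 x)"
  shows "\<forall>x. ipnorm ip0 (f1 x - f2 x) \<le> K * ipnorm ip0 x" and "0 \<le> K"
proof -
  obtain K1 K2 where K1: "\<forall>x. ipnorm ip0 (f1 x) \<le> K1 * ipnorm ip0 x"
    and K2: "\<forall>x. ipnorm ip0 (f2 x) \<le> K2 * ipnorm ip0 x"
    using f1 f2 unfolding bounded_op_def by auto
  have linear: "\<forall>c. \<forall>x\<in>UNIV. f1 (sc c x) - f2 (sc c x) = sc c (f1 x - f2 x)"
    using f1 f2 unfolding clinear_on_def by (simp add: scale_right_diff_distrib)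
  have "\<forall>x\<in>UNIV. ipnorm ip0 (f1 x - f2 x) \<le> (K1 + K2) * ipnorm ip0 x"
    using ipnorm_diff_le[OF ip0] K1 K2 by (smt (verit, best) distrib_right UNIV_I)
  from op_norm_linear_bound[OF ip0 ip0 linear this]
  show "\<forall>x. ipnorm ip0 (f1 x - f2 x) \<le> K * ipnorm ip0 x" and "0 \<le> K"
    unfolding K_def by auto
qed

lemma op_norm_le_one_bound:
  assumes ipH: "cinner_on sc H ipH" and ip0: "cinner_on sc UNIV ip0"
    and linear: "clinear_on sc H D" and bounded: "bounded_op H (ipnorm ipH) (ipnorm ip0) D"
    and norm: "op_norm H (ipnorm ipH) (ipnorm ip0) D \<le> 1" and x: "x \<in> H"
  shows "ipnorm ip0 (D x) \<le> ipnorm ipH x"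
proof -
  obtain K where "\<forall>x\<in>H. ipnorm ip0 (D x) \<le> K * ipnorm ipH x"
    using bounded unfolding bounded_op_def by blast
  moreover have "\<forall>c. \<forall>x\<in>H. D (sc c x) = sc c (D x)" using linear unfolding clinear_on_def by blast
  ultimately have "ipnorm ip0 (D x) \<le> op_norm H (ipnorm ipH) (ipnorm ip0) D * ipnorm ipH x"
    using op_norm_linear_bound(1)[OF ipH ip0] x by blast
  also have "\<dots> \<le> ipnorm ipH x" using mult_right_mono[OF norm ipnorm_nonneg[OF ipH x]] by simp
  finally show ?thesis .
qed

lemma form_op_inv_solves:
  assumes "form_op_invertible sc H nS a" and "dual_elem sc H nS f"
  shows "form_op_inv H a f \<in> H \<and> (\<forall>v\<in>H. a (form_op_inv H a f) v = f v)"
proof -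
  have "\<exists>!u. u \<in> H \<and> (\<forall>v\<in>H. a u v = f v)"
    using assms unfolding form_op_invertible_def by blast
  then show ?thesis unfolding form_op_inv_def by (rule theI')
qed

lemma form_op_inv_norm_upper:
  assumes ipH: "cinner_on sc H ipH" and inv: "form_op_invertible sc H (ipnorm ipH) a"
    and f: "dual_elem sc H (ipnorm ipH) f" and f1: "dual_norm H (ipnorm ipH) f \<le> 1"
  shows "ipnorm ipH (form_op_inv H a f) \<le> form_op_inv_norm sc H (ipnorm ipH) a"
proof -
  obtain K where K: "\<forall>u\<in>H. ipnorm ipH u \<le> K * dual_norm H (ipnorm ipH) (\<lambda>v. a u v)"
    using inv unfolding form_op_invertible_def by blast
  have "bdd_above {ipnorm ipH (form_op_inv H a g) |g.
      dual_elem sc H (ipnorm ipH) g \<and> dual_norm H (ipnorm ipH) g \<le> 1}"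
  proof (rule bdd_aboveI[where M = "max K 0"], safe)
    fix g assume g: "dual_elem sc H (ipnorm ipH) g" "dual_norm H (ipnorm ipH) g \<le> 1"
    note solves = form_op_inv_solves[OF inv g(1)]
    have "dual_norm H (ipnorm ipH) (\<lambda>v. a (form_op_inv H a g) v) = dual_norm H (ipnorm ipH) g"
      unfolding dual_norm_def using solves by (metis (no_types, lifting))
    then have "ipnorm ipH (form_op_inv H a g) \<le> K * dual_norm H (ipnorm ipH) g"
      using K[rule_format, of "form_op_inv H a g"] solves by simp
    then show "ipnorm ipH (form_op_inv H a g) \<le> max K 0"
      using g(2) dual_norm_nonneg[OF ipH g(1)]
      by (metis max.cobounded1 max.cobounded2 mult_left_le mult_right_mono order_trans)
  qed
  then show ?thesis
    unfolding form_op_inv_norm_def by (rule cSup_upper[rotated]) (use f f1 in blast)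
qed

lemma riesz_dual_elem:
  assumes ipH: "cinner_on sc H ipH" and w: "w \<in> H"
  shows "dual_elem sc H (ipnorm ipH) (ipH w)"
  unfolding dual_elem_def
  using sesquilinear_on_add_right[OF cinner_on_sesquilinear_on[OF ipH] _ _ w]
    sesquilinear_on_scale_right[OF cinner_on_sesquilinear_on[OF ipH] w]
    cinner_on_cauchy_schwarz[OF ipH w]
  by blast

lemma dual_norm_riesz_le:
  assumes ipH: "cinner_on sc H ipH" and w: "w \<in> H"
  shows "dual_norm H (ipnorm ipH) (ipH w) \<le> ipnorm ipH w"
  unfolding dual_norm_def
proof (rule cSup_least)
  have "0 \<in> H" using subspace_0[OF cinner_on_subspace[OF ipH]] .
  then show "{cmod (ipH w x) |x. x \<in> H \<and> ipnorm ipH x \<le> 1} \<noteq> {}"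
    using ipnorm_eq_0_iff[OF ipH] by fastforce
next
  fix t assume "t \<in> {cmod (ipH w x) |x. x \<in> H \<and> ipnorm ipH x \<le> 1}"
  then obtain x where x: "x \<in> H" "ipnorm ipH x \<le> 1" "t = cmod (ipH w x)" by blast
  then show "t \<le> ipnorm ipH w"
    using cinner_on_cauchy_schwarz[OF ipH w x(1)] mult_left_mono[OF x(2) ipnorm_nonneg[OF ipH w]]
    by simp
qed

lemma form_op_inv_norm_pos:
  assumes ipH: "cinner_on sc H ipH" and a: "sesquilinear_on sc H a"
    and inv: "form_op_invertible sc H (ipnorm ipH) a" and w: "w \<in> H" "w \<noteq> 0"
  shows "0 < form_op_inv_norm sc H (ipnorm ipH) a"
proof -
  define w' where "w' = sc (of_real (1 / ipnorm ipH w)) w"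
  have w'H: "w' \<in> H" unfolding w'_def using subspace_scale[OF cinner_on_subspace[OF ipH] w(1)] .
  have w'1: "ipnorm ipH w' = 1"
    unfolding w'_def using ipnorm_scale[OF ipH w(1)] ipnorm_pos[OF ipH w] by (simp add: norm_divide)
  note f = riesz_dual_elem[OF ipH w'H]
  define u where "u = form_op_inv H a (ipH w')"
  have u: "u \<in> H" "\<forall>v\<in>H. a u v = ipH w' v" using form_op_inv_solves[OF inv f] unfolding u_def by auto
  have "u \<noteq> 0"
  proof
    assume "u = 0"
    then have "ipH w' w' = 0" using u sesquilinear_on_zero_left[OF a cinner_on_subspace[OF ipH] w'H] w'H by metis
    then show False using w'1 unfolding ipnorm_def by simp
  qed
  then have "0 < ipnorm ipH u" using ipnorm_pos[OF ipH u(1)] by simp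
  also have "\<dots> \<le> form_op_inv_norm sc H (ipnorm ipH) a"
    unfolding u_def using form_op_inv_norm_upper[OF ipH inv f] dual_norm_riesz_le[OF ipH w'H] w'1 by simp
  finally show ?thesis .
qed

end

lemma (in complex_vector_space) basis_nonzero:
  assumes indep: "\<forall>V\<in>carrier_vec N. combo sc ph V = 0 \<longrightarrow> V = 0\<^sub>v N" and j: "j < N"
  shows "ph j \<noteq> 0"
proof
  assume "ph j = 0"
  then have "unit_vec N j = (0\<^sub>v N :: complex vec)"
    using indep combo_unit_vec[OF j] by simp
  then have "unit_vec N j $ j = (0\<^sub>v N :: complex vec) $ j" by simp
  then show False using j by simp
qed

locale perturbed_forms = complex_vector_space sc for sc :: "complex \<Rightarrow> 'a::ab_group_add \<Rightarrow> 'a" +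
  fixes ip0 ipH :: "'a \<Rightarrow> 'a \<Rightarrow> complex" and H :: "'a set" and D :: "'a \<Rightarrow> 'a"
    and b :: "'a \<Rightarrow> 'a \<Rightarrow> complex" and mu1inv mu2inv eps1 eps2 :: "'a \<Rightarrow> 'a"
  assumes ip0: "cinner_on sc UNIV ip0" and ipH: "cinner_on sc H ipH"
    and norm_le: "\<forall>v\<in>H. ipnorm ip0 v \<le> ipnorm ipH v"
    and D_lin: "clinear_on sc H D" and D_bdd: "bounded_op H (ipnorm ipH) (ipnorm ip0) D"
    and D_norm: "op_norm H (ipnorm ipH) (ipnorm ip0) D \<le> 1"
    and b_cont: "bdd_sesq_on sc H (ipnorm ipH) b"
    and mu1_op: "clinear_on sc UNIV mu1inv \<and> bounded_op UNIV (ipnorm ip0) (ipnorm ip0) mu1inv"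
    and mu2_op: "clinear_on sc UNIV mu2inv \<and> bounded_op UNIV (ipnorm ip0) (ipnorm ip0) mu2inv"
    and eps1_op: "clinear_on sc UNIV eps1 \<and> bounded_op UNIV (ipnorm ip0) (ipnorm ip0) eps1"
    and eps2_op: "clinear_on sc UNIV eps2 \<and> bounded_op UNIV (ipnorm ip0) (ipnorm ip0) eps2"
begin

abbreviation "a1 \<equiv> aform ip0 D b mu1inv eps1"
abbreviation "a2 \<equiv> aform ip0 D b mu2inv eps2"
abbreviation "dmu \<equiv> op_norm UNIV (ipnorm ip0) (ipnorm ip0) (\<lambda>x. mu1inv x - mu2inv x)"
abbreviation "deps \<equiv> op_norm UNIV (ipnorm ip0) (ipnorm ip0) (\<lambda>x. eps1 x - eps2 x)"

lemma a1_sesquilinear_on: "sesquilinear_on sc H a1"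
  using aform_sesquilinear_on[OF ip0 D_lin conjunct1[OF mu1_op] conjunct1[OF eps1_op] b_cont] .

lemma a2_sesquilinear_on: "sesquilinear_on sc H a2"
  using aform_sesquilinear_on[OF ip0 D_lin conjunct1[OF mu2_op] conjunct1[OF eps2_op] b_cont] .

lemmas mu_diff_bound = bounded_op_diff_bound[OF ip0 mu1_op mu2_op]
lemmas eps_diff_bound = bounded_op_diff_bound[OF ip0 eps1_op eps2_op]

lemma diff_bound: "\<forall>u\<in>H. \<forall>v\<in>H. cmod (a1 u v - a2 u v) \<le> (dmu + deps) * ipnorm ipH u * ipnorm ipH v"
proof (intro ballI)
  fix u v assume u: "u \<in> H" and v: "v \<in> H"
  note n0 = ipnorm_nonneg[OF ip0] and nH = ipnorm_nonneg[OF ipH]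
  note D_le = op_norm_le_one_bound[OF ipH ip0 D_lin D_bdd D_norm]
  have "ipnorm ip0 (D u) * ipnorm ip0 (D v) \<le> ipnorm ipH u * ipnorm ipH v"
    using D_le u v n0 nH by (intro mult_mono) auto
  moreover have "ipnorm ip0 u * ipnorm ip0 v \<le> ipnorm ipH u * ipnorm ipH v"
    using norm_le u v n0 nH by (intro mult_mono) auto
  ultimately have "dmu * (ipnorm ip0 (D u) * ipnorm ip0 (D v)) + deps * (ipnorm ip0 u * ipnorm ip0 v)
      \<le> dmu * (ipnorm ipH u * ipnorm ipH v) + deps * (ipnorm ipH u * ipnorm ipH v)"
    using mu_diff_bound(2) eps_diff_bound(2) by (intro add_mono mult_left_mono) auto
  then show "cmod (a1 u v - a2 u v) \<le> (dmu + deps) * ipnorm ipH u * ipnorm ipH v"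
    using aform_diff_le[OF ip0 mu_diff_bound(1) eps_diff_bound(1), of D b u v]
    by (simp add: algebra_simps)
qed

lemma diff_bound_same_mu:
  assumes "mu1inv = mu2inv"
  shows "\<forall>u\<in>H. \<forall>v\<in>H. cmod (a1 u v - a2 u v) \<le> deps * ipnorm ip0 u * ipnorm ip0 v"
proof -
  have "\<forall>x. ipnorm ip0 (mu1inv x - mu2inv x) \<le> 0 * ipnorm ip0 x"
    using assms ipnorm_eq_0_iff[OF ip0 UNIV_I, of 0] by simp
  then show ?thesis using aform_diff_le[OF ip0 _ eps_diff_bound(1)] by fastforce
qed

end

theorem theorem4p2:
  fixes sc :: "complex \<Rightarrow> 'a::ab_group_add \<Rightarrow> 'a"
    and ip0 ipH :: "'a \<Rightarrow> 'a \<Rightarrow> complex"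
    and H :: "'a set"
    and D :: "'a \<Rightarrow> 'a"
    and b :: "'a \<Rightarrow> 'a \<Rightarrow> complex"
    and mu1inv mu2inv eps1 eps2 :: "'a \<Rightarrow> 'a"
    and phi :: "nat \<Rightarrow> nat \<Rightarrow> 'a"
    and DD :: "nat \<Rightarrow> complex mat"
    and mm mp :: "nat \<Rightarrow> real"
    and C1 :: real
  defines "n0 \<equiv> ipnorm ip0"
    and "nH \<equiv> ipnorm ipH"
    and "a1 \<equiv> aform ip0 D b mu1inv eps1"
    and "a2 \<equiv> aform ip0 D b mu2inv eps2"
    and "HN \<equiv> (\<lambda>N. galerkin_space sc (phi N) N)"
    and "A1 \<equiv> (\<lambda>N. galerkin_mat (aform ip0 D b mu1inv eps1) (phi N) N)"
    and "A2 \<equiv> (\<lambda>N. galerkin_mat (aform ip0 D b mu2inv eps2) (phi N) N)"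
    and "invA1 \<equiv> form_op_inv_norm sc H (ipnorm ipH) (aform ip0 D b mu1inv eps1)"
    and "dmu \<equiv> op_norm UNIV (ipnorm ip0) (ipnorm ip0) (\<lambda>x. mu1inv x - mu2inv x)"
    and "deps \<equiv> op_norm UNIV (ipnorm ip0) (ipnorm ip0) (\<lambda>x. eps1 x - eps2 x)"
  assumes vs: "vector_space sc"
    and H0_hilbert: "hilbert_on sc UNIV ip0"
    and H_hilbert: "hilbert_on sc H ipH"
    and norm_le: "\<forall>v\<in>H. n0 v \<le> nH v"
    and D_lin: "clinear_on sc H D" and D_bdd: "bounded_op H nH n0 D"
    and D_norm: "op_norm H nH n0 D \<le> 1"
    and b_cont: "bdd_sesq_on sc H nH b"
    and mu1_op: "clinear_on sc UNIV mu1inv \<and> bounded_op UNIV n0 n0 mu1inv"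
    and mu2_op: "clinear_on sc UNIV mu2inv \<and> bounded_op UNIV n0 n0 mu2inv"
    and eps1_op: "clinear_on sc UNIV eps1 \<and> bounded_op UNIV n0 n0 eps1"
    and eps2_op: "clinear_on sc UNIV eps2 \<and> bounded_op UNIV n0 n0 eps2"
    and garding1: "\<exists>CG1>0. \<exists>CG2>0. \<forall>v\<in>H.
        cmod (a1 v v + complex_of_real (CG2 * (n0 v)\<^sup>2)) \<ge> CG1 * (nH v)\<^sup>2"
    and garding2: "\<exists>CG1>0. \<exists>CG2>0. \<forall>v\<in>H.
        cmod (a2 v v + complex_of_real (CG2 * (n0 v)\<^sup>2)) \<ge> CG1 * (nH v)\<^sup>2"
    and phi_in: "\<forall>N\<ge>1. \<forall>j<N. phi N j \<in> H"
    and phi_indep: "\<forall>N\<ge>1. \<forall>V\<in>carrier_vec N. combo sc (phi N) V = 0 \<longrightarrow> V = 0\<^sub>v N"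
    and DD_hpd: "\<forall>N\<ge>1. hermitian_pd N (DD N)"
    and DD_norm: "\<forall>N\<ge>1. \<forall>V\<in>carrier_vec N. nH (combo sc (phi N) V) = wnorm (DD N) V"
    and m_pos: "\<forall>N\<ge>1. 0 < mm N \<and> 0 < mp N"
    and m_bounds: "\<forall>N\<ge>1. \<forall>V\<in>carrier_vec N.
        mm N * norm2 V \<le> n0 (combo sc (phi N) V) \<and> n0 (combo sc (phi N) V) \<le> mp N * norm2 V"
    and A1_inv: "form_op_invertible sc H nH a1"
    and C1_pos: "C1 > 0"
    and infsup: "\<forall>N\<ge>1. (INF u\<in>HN N - {0}. SUP v\<in>HN N - {0}.
          ereal (cmod (a1 u v) / (nH u * nH v))) \<ge> ereal (1 / (C1 * invA1))"
    and nondeg: "\<forall>N\<ge>1. \<forall>v\<in>HN N - {0}. (SUP u\<in>HN N - {0}. ereal (cmod (a1 u v))) > 0"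
    and small: "(dmu + deps) * C1 * invA1 \<le> 1 / 2"
  shows "\<forall>N\<ge>1. invertible_mat (A2 N) \<and>
     max (induced_norm N (DD N) (1\<^sub>m N - mat_inv N (A2 N) * A1 N))
         (induced_norm N (mat_inv N (DD N)) (1\<^sub>m N - A1 N * mat_inv N (A2 N)))
       \<le> 2 * (dmu + deps) * C1 * invA1 \<and>
     (mu1inv = mu2inv \<longrightarrow>
       max (induced_norm2 N (1\<^sub>m N - mat_inv N (A2 N) * A1 N))
           (induced_norm2 N (1\<^sub>m N - A1 N * mat_inv N (A2 N)))
         \<le> 2 * (mp N / mm N) * deps * C1 * invA1)"
  apply (intro allI impI)
  subgoal premises N for N
  proof -
    interpret perturbed_forms sc ip0 ipH H D b mu1inv mu2inv eps1 eps2
      using vs H0_hilbert H_hilbert norm_le D_lin D_bdd D_norm b_cont mu1_op mu2_op eps1_op eps2_op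
      unfolding complex_vector_space_def perturbed_forms_def perturbed_forms_axioms_def
        hilbert_on_def n0_def nH_def by blast
    note forms = a1_sesquilinear_on a2_sesquilinear_on diff_bound diff_bound_same_mu
      mu_diff_bound(2) eps_diff_bound(2)
    note forms = forms[folded a1_def a2_def dmu_def deps_def]
    have "0 < invA1"
      unfolding invA1_def
      using form_op_inv_norm_pos[OF ipH a1_sesquilinear_on A1_inv[unfolded nH_def a1_def]]
        phi_in phi_indep basis_nonzero N by fastforce
    define g where "g = 1 / (C1 * invA1)"
    have g: "0 < g" "dmu + deps \<le> g / 2" "\<And>x. x / g = x * C1 * invA1"
      unfolding g_def using \<open>0 < invA1\<close> C1_pos small by (simp_all add: field_simps)
    interpret galerkin_perturbation sc ipH H a1 a2 "phi N" N "DD N" g "dmu + deps"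
      using ipH forms phi_in phi_indep DD_hpd DD_norm infsup g N
      unfolding galerkin_perturbation_axioms_def nH_def HN_def g_def[symmetric]
      by unfold_locales auto
    have "max (induced_norm2 N (1\<^sub>m N - mat_inv N (A2 N) * A1 N))
        (induced_norm2 N (1\<^sub>m N - A1 N * mat_inv N (A2 N))) \<le> 2 * (mp N / mm N) * deps * C1 * invA1"
      if "mu1inv = mu2inv"
    proof -
      interpret galerkin_perturbation_euclidean sc ipH H a1 a2 "phi N" N "DD N" g "dmu + deps"
        ip0 deps "mm N" "mp N"
        using ip0 norm_le forms(4)[OF that] forms(6) m_pos m_bounds N
        unfolding galerkin_perturbation_euclidean_axioms_def n0_def
        by unfold_locales auto
      show ?thesis
        using induced_norm2_left_residual_le induced_norm2_right_residual_le g(3)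
        unfolding A1_def A2_def a1_def[symmetric] a2_def[symmetric] by simp
    qed
    then show ?thesis
      using A2_inverse(4) induced_norm_left_residual_le induced_norm_right_residual_le g(3)
      unfolding A1_def A2_def a1_def[symmetric] a2_def[symmetric] by simp
  qed
  done

end
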